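(* Let $f\in C^1_b(\mathbb{R})\cap C^2(\mathbb{R})$ and $0<\gamma\le\beta\le\alpha$. Set $X=C^{2,\beta}(\mathbb{T}^d)\times C^{2,\gamma}(\mathbb{T}^d)$ and $Z=C^{0,\alpha}(\mathbb{T}^d)\times C^{0,\beta}(\mathbb{T}^d)$. Then the mapping $G\colon X\to Z$, $G(v,\rho)=(\tfrac12|Dv|^2-f(\rho),-\operatorname{div}(\rho Dv)-\lambda m_0)$, is continuously differentiable and for every $(u,m)\in X$, $dG[u,m](v,\rho)=\big(Du\cdot Dv - f'(m)\rho,\ -\operatorname{div}(\rho Du)-\operatorname{div}(mDv)\big)$. Furthermore, if $f\in C^{2,1}_{\mathrm{loc}}(\mathbb{R})$, then $dG$ is locally Lipschitz continuous (as a map $X\to\mathcal{L}(X,Z)$).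
   Context: $\mathbb{T}^d$ is the flat torus, $\lambda>0$, $\alpha\in(0,1)$, $m_0\in C^{0,\alpha}(\mathbb{T}^d)$ a probability density. $C^1_b(\mathbb{R})$: $C^1$ functions with $f,f'$ bounded; $C^{2,1}_{\mathrm{loc}}(\mathbb{R})$: $C^2$ functions with $f''$ Lipschitz on bounded sets. $C^{k,\beta}(\mathbb{T}^d)$ are the usual Hölder spaces. *)

theory Defs
  imports "HOL-Analysis.Analysis"
begin

text \<open>Functions on the flat torus T^d = R^d / Z^d are represented as Z^d-periodic
functions on R^d (the index type 'd is finite, d = CARD('d)).\<close>

definition periodic :: "(real^('d::finite) \<Rightarrow> 'b) \<Rightarrow> bool" where
  "periodic g \<longleftrightarrow> (\<forall>x i. g (x + axis i 1) = g x)"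

definition holder :: "real \<Rightarrow> (real^('d::finite) \<Rightarrow> 'b::real_normed_vector) \<Rightarrow> bool" where
  "holder a g \<longleftrightarrow> (\<exists>C. \<forall>x y. norm (g x - g y) \<le> C * dist x y powr a)"

definition holder_seminorm :: "real \<Rightarrow> (real^('d::finite) \<Rightarrow> 'b::real_normed_vector) \<Rightarrow> real" where
  "holder_seminorm a g = (SUP p \<in> {(x,y). x \<noteq> y}. norm (g (fst p) - g (snd p)) / dist (fst p) (snd p) powr a)"

definition supnorm :: "(real^('d::finite) \<Rightarrow> 'b::real_normed_vector) \<Rightarrow> real" where
  "supnorm g = (SUP x. norm (g x))"

definition grad :: "(real^('d::finite) \<Rightarrow> real) \<Rightarrow> real^('d::finite) \<Rightarrow> real^('d::finite)" where
  "grad u x = (\<chi> i. frechet_derivative u (at x) (axis i 1))"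

definition hess :: "(real^('d::finite) \<Rightarrow> real) \<Rightarrow> real^('d::finite) \<Rightarrow> real^('d::finite)^'d" where
  "hess u x = (\<chi> i. grad (\<lambda>y. grad u y $ i) x)"

definition diverg :: "(real^('d::finite) \<Rightarrow> real^('d::finite)) \<Rightarrow> real^('d::finite) \<Rightarrow> real" where
  "diverg F x = (\<Sum>i\<in>UNIV. frechet_derivative (\<lambda>y. F y $ i) (at x) (axis i 1))"

definition C0 :: "real \<Rightarrow> (real^('d::finite) \<Rightarrow> real) set" where
  "C0 a = {g. periodic g \<and> continuous_on UNIV g \<and> holder a g}"

definition C0_norm :: "real \<Rightarrow> (real^('d::finite) \<Rightarrow> real) \<Rightarrow> real" where
  "C0_norm a g = supnorm g + holder_seminorm a g"

definition C2 :: "real \<Rightarrow> (real^('d::finite) \<Rightarrow> real) set" where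
  "C2 b = {u. periodic u \<and> (\<forall>x. u differentiable (at x))
              \<and> (\<forall>x i. (\<lambda>y. grad u y $ i) differentiable (at x))
              \<and> continuous_on UNIV (hess u) \<and> holder b (hess u)}"

definition C2_norm :: "real \<Rightarrow> (real^('d::finite) \<Rightarrow> real) \<Rightarrow> real" where
  "C2_norm b u = supnorm u + supnorm (grad u) + supnorm (hess u) + holder_seminorm b (hess u)"

type_synonym 'd fpair = "(real^('d::finite) \<Rightarrow> real) \<times> (real^('d::finite) \<Rightarrow> real)"

definition padd :: "('d::finite) fpair \<Rightarrow> ('d::finite) fpair \<Rightarrow> ('d::finite) fpair" where
  "padd p q = ((\<lambda>x. fst p x + fst q x), (\<lambda>x. snd p x + snd q x))"

definition psub :: "('d::finite) fpair \<Rightarrow> ('d::finite) fpair \<Rightarrow> ('d::finite) fpair" where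
  "psub p q = ((\<lambda>x. fst p x - fst q x), (\<lambda>x. snd p x - snd q x))"

definition pscale :: "real \<Rightarrow> ('d::finite) fpair \<Rightarrow> ('d::finite) fpair" where
  "pscale c p = ((\<lambda>x. c * fst p x), (\<lambda>x. c * snd p x))"

definition Xsp :: "real \<Rightarrow> real \<Rightarrow> ('d::finite) fpair set" where
  "Xsp b c = C2 b \<times> C2 c"
definition Xnorm :: "real \<Rightarrow> real \<Rightarrow> ('d::finite) fpair \<Rightarrow> real" where
  "Xnorm b c p = C2_norm b (fst p) + C2_norm c (snd p)"
definition Zsp :: "real \<Rightarrow> real \<Rightarrow> ('d::finite) fpair set" where
  "Zsp a b = C0 a \<times> C0 b"
definition Znorm :: "real \<Rightarrow> real \<Rightarrow> ('d::finite) fpair \<Rightarrow> real" where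
  "Znorm a b p = C0_norm a (fst p) + C0_norm b (snd p)"

definition bounded_linear_between ::
  "('d::finite) fpair set \<Rightarrow> (('d::finite) fpair \<Rightarrow> real) \<Rightarrow> ('d::finite) fpair set \<Rightarrow> (('d::finite) fpair \<Rightarrow> real) \<Rightarrow> (('d::finite) fpair \<Rightarrow> ('d::finite) fpair) \<Rightarrow> bool" where
  "bounded_linear_between X NX Z NZ L \<longleftrightarrow>
     (\<forall>h\<in>X. L h \<in> Z) \<and>
     (\<forall>h\<in>X. \<forall>k\<in>X. L (padd h k) = padd (L h) (L k)) \<and>
     (\<forall>h\<in>X. \<forall>c. L (pscale c h) = pscale c (L h)) \<and>
     (\<exists>C. \<forall>h\<in>X. NZ (L h) \<le> C * NX h)"

definition frechet_deriv_at ::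
  "('d::finite) fpair set \<Rightarrow> (('d::finite) fpair \<Rightarrow> real) \<Rightarrow> ('d::finite) fpair set \<Rightarrow> (('d::finite) fpair \<Rightarrow> real) \<Rightarrow>
   (('d::finite) fpair \<Rightarrow> ('d::finite) fpair) \<Rightarrow> (('d::finite) fpair \<Rightarrow> ('d::finite) fpair) \<Rightarrow> ('d::finite) fpair \<Rightarrow> bool" where
  "frechet_deriv_at X NX Z NZ G dGx x \<longleftrightarrow>
     bounded_linear_between X NX Z NZ dGx \<and>
     (\<forall>e>0. \<exists>r>0. \<forall>h\<in>X. NX h < r \<longrightarrow>
         NZ (psub (psub (G (padd x h)) (G x)) (dGx h)) \<le> e * NX h)"

definition deriv_continuous ::
  "('d::finite) fpair set \<Rightarrow> (('d::finite) fpair \<Rightarrow> real) \<Rightarrow> (('d::finite) fpair \<Rightarrow> real) \<Rightarrow> (('d::finite) fpair \<Rightarrow> ('d::finite) fpair \<Rightarrow> ('d::finite) fpair) \<Rightarrow> bool" where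
  "deriv_continuous X NX NZ dG \<longleftrightarrow>
     (\<forall>x\<in>X. \<forall>e>0. \<exists>r>0. \<forall>y\<in>X. NX (psub y x) < r \<longrightarrow>
        (\<forall>h\<in>X. NZ (psub (dG y h) (dG x h)) \<le> e * NX h))"

definition deriv_locally_lipschitz ::
  "('d::finite) fpair set \<Rightarrow> (('d::finite) fpair \<Rightarrow> real) \<Rightarrow> (('d::finite) fpair \<Rightarrow> real) \<Rightarrow> (('d::finite) fpair \<Rightarrow> ('d::finite) fpair \<Rightarrow> ('d::finite) fpair) \<Rightarrow> bool" where
  "deriv_locally_lipschitz X NX NZ dG \<longleftrightarrow>
     (\<forall>x\<in>X. \<exists>r>0. \<exists>K. \<forall>y\<in>X. \<forall>z\<in>X. NX (psub y x) < r \<longrightarrow> NX (psub z x) < r \<longrightarrow>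
        (\<forall>h\<in>X. NZ (psub (dG y h) (dG z h)) \<le> K * NX (psub y z) * NX h))"

definition Gmap :: "(real \<Rightarrow> real) \<Rightarrow> real \<Rightarrow> (real^('d::finite) \<Rightarrow> real) \<Rightarrow> ('d::finite) fpair \<Rightarrow> ('d::finite) fpair" where
  "Gmap f lam m0 p =
     ((\<lambda>x. 1/2 * (norm (grad (fst p) x))\<^sup>2 - f (snd p x)),
      (\<lambda>x. - diverg (\<lambda>y. snd p y *\<^sub>R grad (fst p) y) x - lam * m0 x))"

definition dGmap :: "(real \<Rightarrow> real) \<Rightarrow> ('d::finite) fpair \<Rightarrow> ('d::finite) fpair \<Rightarrow> ('d::finite) fpair" where
  "dGmap f um vr =
     ((\<lambda>x. grad (fst um) x \<bullet> grad (fst vr) x - deriv f (snd um x) * snd vr x),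
      (\<lambda>x. - diverg (\<lambda>y. snd vr y *\<^sub>R grad (fst um) y) x
           - diverg (\<lambda>y. snd um y *\<^sub>R grad (fst vr) y) x))"

end

theory Submission
  imports Defs
begin

text \<open>Both components of \<open>G\<close> are built from \<open>u\<close>, \<open>m\<close> and their first and second derivatives
  by sums and products, plus the superposition \<open>f(m)\<close>. Sup bounds and Hoelder constants are
  stable under these operations, and the only second derivatives that occur are those of the
  \<open>C\<^sup>2\<^sup>,\<^sup>\<beta>\<close> component, so every bilinear term is estimated by a product of \<open>C\<^sup>2\<close> norms.
  The first component contains first derivatives only; it is Lipschitz, which controls its
  \<open>C\<^sup>0\<^sup>,\<^sup>\<alpha>\<close> norm because \<open>\<alpha> \<le> 1\<close>. The nonlinearity is handled by Taylor's formula: the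
  remainder \<open>f(m + \<rho>) - f(m) - f'(m) \<rho>\<close> is bounded by \<open>|\<rho>|\<^sup>2\<close>, and its Lipschitz constant is
  small thanks to the uniform continuity of \<open>f''\<close> on bounded sets. The same estimates give
  continuity of \<open>dG\<close>, and local Lipschitz continuity once \<open>f''\<close> is locally Lipschitz.\<close>

section \<open>Sup bounds and Hoelder constants\<close>

definition bounded_by :: "('a \<Rightarrow> real) \<Rightarrow> real \<Rightarrow> bool" where
  "bounded_by g S \<longleftrightarrow> (\<forall>x. \<bar>g x\<bar> \<le> S)"

definition holder_with :: "real \<Rightarrow> ('a::metric_space \<Rightarrow> real) \<Rightarrow> real \<Rightarrow> bool" where
  "holder_with a g K \<longleftrightarrow> (\<forall>x y. \<bar>g x - g y\<bar> \<le> K * dist x y powr a)"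

text \<open>Lipschitz bounds are Hoelder bounds of exponent 1, so the calculus rules below serve both.\<close>

abbreviation lipschitz_with :: "('a::metric_space \<Rightarrow> real) \<Rightarrow> real \<Rightarrow> bool" where
  "lipschitz_with \<equiv> holder_with 1"

lemma lipschitz_with_iff: "lipschitz_with g L \<longleftrightarrow> (\<forall>x y. \<bar>g x - g y\<bar> \<le> L * dist x y)"
  unfolding holder_with_def by simp

lemma bounded_by_nonneg: "bounded_by g S \<Longrightarrow> 0 \<le> S"
  unfolding bounded_by_def by (meson abs_ge_zero order_trans)

lemma bounded_by_mono: "bounded_by g A \<Longrightarrow> A \<le> B \<Longrightarrow> bounded_by g B"
  unfolding bounded_by_def using order_trans by blast

lemma bounded_by_add: "bounded_by f A \<Longrightarrow> bounded_by g B \<Longrightarrow> bounded_by (\<lambda>x. f x + g x) (A + B)"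
  unfolding bounded_by_def by (meson abs_triangle_ineq add_mono order_trans)

lemma bounded_by_diff: "bounded_by f A \<Longrightarrow> bounded_by g B \<Longrightarrow> bounded_by (\<lambda>x. f x - g x) (A + B)"
  unfolding bounded_by_def by (meson abs_triangle_ineq4 add_mono order_trans)

lemma bounded_by_uminus: "bounded_by f A \<Longrightarrow> bounded_by (\<lambda>x. - f x) A"
  unfolding bounded_by_def by simp

lemma bounded_by_mult: "bounded_by f A \<Longrightarrow> bounded_by g B \<Longrightarrow> bounded_by (\<lambda>x. f x * g x) (A * B)"
  unfolding bounded_by_def by (simp add: abs_mult mult_mono')

lemma bounded_by_cmult: "bounded_by f A \<Longrightarrow> bounded_by (\<lambda>x. c * f x) (\<bar>c\<bar> * A)"
  unfolding bounded_by_def by (simp add: abs_mult mult_left_mono)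

lemma bounded_by_sum:
  "finite I \<Longrightarrow> (\<And>i. i \<in> I \<Longrightarrow> bounded_by (g i) (A i)) \<Longrightarrow>
    bounded_by (\<lambda>x. \<Sum>i\<in>I. g i x) (\<Sum>i\<in>I. A i)"
  unfolding bounded_by_def by (intro allI order_trans[OF sum_abs sum_mono]) auto

lemma bounded_range_imp_bounded_by:
  fixes g :: "'a \<Rightarrow> real"
  assumes "bounded (range g)"
  obtains B where "bounded_by g B"
  using assms unfolding bounded_iff bounded_by_def by auto

lemma holder_with_mono: "holder_with a f A \<Longrightarrow> A \<le> B \<Longrightarrow> holder_with a f B"
  unfolding holder_with_def by (meson mult_right_mono order_trans powr_ge_zero)

lemma holder_with_add:
  "holder_with a f A \<Longrightarrow> holder_with a g B \<Longrightarrow> holder_with a (\<lambda>x. f x + g x) (A + B)"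
  unfolding holder_with_def by (smt (verit, best) distrib_right)

lemma holder_with_diff:
  "holder_with a f A \<Longrightarrow> holder_with a g B \<Longrightarrow> holder_with a (\<lambda>x. f x - g x) (A + B)"
  unfolding holder_with_def by (smt (verit, best) distrib_right)

lemma holder_with_uminus: "holder_with a f A \<Longrightarrow> holder_with a (\<lambda>x. - f x) A"
  unfolding holder_with_def by (smt (verit, best))

lemma holder_with_cmult: "holder_with a f A \<Longrightarrow> holder_with a (\<lambda>x. c * f x) (\<bar>c\<bar> * A)"
  unfolding holder_with_def
  by (metis abs_ge_zero abs_mult mult.assoc mult_left_mono right_diff_distrib)

lemma holder_with_sum:
  assumes "finite I" "\<And>i. i \<in> I \<Longrightarrow> holder_with a (g i) (A i)"
  shows "holder_with a (\<lambda>x. \<Sum>i\<in>I. g i x) (\<Sum>i\<in>I. A i)"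
  unfolding holder_with_def
proof (intro allI)
  fix x y
  have "\<bar>\<Sum>i\<in>I. g i x - g i y\<bar> \<le> (\<Sum>i\<in>I. A i * dist x y powr a)"
    using assms unfolding holder_with_def by (intro order_trans[OF sum_abs sum_mono]) auto
  then show "\<bar>(\<Sum>i\<in>I. g i x) - (\<Sum>i\<in>I. g i y)\<bar> \<le> (\<Sum>i\<in>I. A i) * dist x y powr a"
    by (simp add: sum_subtractf sum_distrib_right)
qed

lemma holder_with_mult:
  assumes "bounded_by f A" "holder_with a f L" "bounded_by g B" "holder_with a g M"
  shows "holder_with a (\<lambda>x. f x * g x) (A * M + B * L)"
  unfolding holder_with_def
proof (intro allI)
  fix x y
  have "f x * g x - f y * g y = f x * (g x - g y) + g y * (f x - f y)"
    by (simp add: algebra_simps)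
  then have "\<bar>f x * g x - f y * g y\<bar> \<le> \<bar>f x\<bar> * \<bar>g x - g y\<bar> + \<bar>g y\<bar> * \<bar>f x - f y\<bar>"
    by (metis abs_mult abs_triangle_ineq)
  also have "\<dots> \<le> A * (M * dist x y powr a) + B * (L * dist x y powr a)"
    using assms unfolding bounded_by_def holder_with_def
    by (intro add_mono mult_mono) (auto intro: order_trans[OF abs_ge_zero])
  finally show "\<bar>f x * g x - f y * g y\<bar> \<le> (A * M + B * L) * dist x y powr a"
    by (simp add: algebra_simps)
qed

text \<open>Distances below 1 are handled by the Hoelder constant, larger ones by the sup bound.\<close>

lemma holder_with_exponent_mono:
  assumes "0 < a" "a \<le> b" "bounded_by g S" "holder_with b g K" "0 \<le> K"
  shows "holder_with a g (K + 2 * S)"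
  unfolding holder_with_def
proof (intro allI)
  fix x y
  have S: "0 \<le> S" using assms(3) by (rule bounded_by_nonneg)
  have osc: "\<bar>g x - g y\<bar> \<le> 2 * S"
    using assms(3) unfolding bounded_by_def by (smt (verit) abs_triangle_ineq4)
  show "\<bar>g x - g y\<bar> \<le> (K + 2 * S) * dist x y powr a"
  proof (cases "dist x y \<le> 1")
    case True
    have "dist x y powr b \<le> dist x y powr a" using True assms by (intro powr_mono') auto
    then have "\<bar>g x - g y\<bar> \<le> K * dist x y powr a"
      using assms(4,5) unfolding holder_with_def by (meson mult_left_mono order_trans)
    then show ?thesis using S by (simp add: algebra_simps add_increasing2)
  next
    case False
    then have "1 \<le> dist x y powr a" using assms by (simp add: ge_one_powr_ge_zero)
    then have "2 * S \<le> 2 * S * dist x y powr a" using S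
      by (metis mult.right_neutral mult_left_mono mult_nonneg_nonneg zero_le_numeral)
    then show ?thesis using osc assms(5) by (simp add: algebra_simps add_increasing)
  qed
qed

lemma holder_with_imp_continuous:
  assumes "0 < a" "holder_with a g K"
  shows "continuous_on UNIV g"
proof -
  have "isCont g x" for x
  proof -
    have bound: "\<forall>\<^sub>F y in at x. norm (g y - g x) \<le> K * dist y x powr a"
      using assms(2) unfolding holder_with_def real_norm_def by (blast intro: always_eventually)
    have "((\<lambda>y. dist y x) \<longlongrightarrow> 0) (at x)"
      using tendsto_dist[OF tendsto_ident_at tendsto_const, of x x UNIV] by simp
    then have "((\<lambda>y. dist y x powr a) \<longlongrightarrow> 0) (at x)"
      using assms(1) by (intro tendsto_zero_powrI[where b = a]) simp_all
    then have "((\<lambda>y. K * dist y x powr a) \<longlongrightarrow> 0) (at x)"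
      by (rule tendsto_mult_right_zero)
    with bound have "((\<lambda>y. g y - g x) \<longlongrightarrow> 0) (at x)"
      by (rule Lim_null_comparison)
    then show ?thesis unfolding isCont_def by (simp add: LIM_zero_iff)
  qed
  then show ?thesis by (simp add: continuous_on_eq_continuous_at)
qed

lemma C0_memI: "periodic g \<Longrightarrow> 0 < a \<Longrightarrow> holder_with a g K \<Longrightarrow> g \<in> C0 a"
  unfolding C0_def holder_def using holder_with_imp_continuous[of a g K]
  by (auto simp: holder_with_def)

lemma C0_norm_le:
  fixes g :: "real^('d::finite) \<Rightarrow> real"
  assumes "bounded_by g S" "holder_with a g K"
  shows "C0_norm a g \<le> S + K"
proof -
  have "supnorm g \<le> S" unfolding supnorm_def
    using assms(1) unfolding bounded_by_def by (intro cSUP_least) auto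
  moreover have "holder_seminorm a g \<le> K" unfolding holder_seminorm_def
  proof (rule cSUP_least)
    have "axis undefined 1 \<noteq> (0 :: real^'d)" by (simp add: axis_eq_0_iff)
    then show "{(x, y). x \<noteq> (y::real^'d)} \<noteq> {}" by blast
  next
    fix p :: "(real^'d) \<times> (real^'d)" assume "p \<in> {(x, y). x \<noteq> y}"
    then have "dist (fst p) (snd p) powr a > 0" by auto
    then show "norm (g (fst p) - g (snd p)) / dist (fst p) (snd p) powr a \<le> K"
      using assms(2) unfolding holder_with_def by (simp add: divide_le_eq)
  qed
  ultimately show ?thesis unfolding C0_norm_def by simp
qed


section \<open>Gradients and Hessians\<close>

lemma vec_basis_expansion: "(\<Sum>i\<in>UNIV. (x $ i) *\<^sub>R axis i (1::real)) = (x::real^('d::finite))"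
  using basis_expansion[of x] by (simp add: scalar_mult_eq_scaleR)

lemma has_derivative_grad:
  fixes u :: "real^('d::finite) \<Rightarrow> real"
  assumes "u differentiable (at x)"
  shows "(u has_derivative (\<lambda>h. grad u x \<bullet> h)) (at x)"
proof -
  let ?L = "frechet_derivative u (at x)"
  have L: "(u has_derivative ?L) (at x)" using assms frechet_derivative_works by blast
  have "?L h = ?L (\<Sum>i\<in>UNIV. (h $ i) *\<^sub>R axis i 1)" for h by (simp add: vec_basis_expansion)
  also have "\<dots> h = (\<Sum>i\<in>UNIV. (h $ i) * ?L (axis i 1))" for h
    using has_derivative_linear[OF L] by (simp add: linear_sum linear_scale)
  also have "\<dots> h = grad u x \<bullet> h" for h
    unfolding grad_def inner_vec_def by (simp add: mult.commute)
  finally have "?L = (\<lambda>h. grad u x \<bullet> h)" by (rule ext)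
  with L show ?thesis by simp
qed

lemma grad_eqI:
  fixes u :: "real^('d::finite) \<Rightarrow> real"
  assumes "(u has_derivative (\<lambda>h. g \<bullet> h)) (at x)"
  shows "grad u x = g"
  using frechet_derivative_at[OF assms, symmetric] unfolding grad_def
  by (simp add: vec_eq_iff cart_eq_inner_axis[symmetric])

lemma grad_add:
  fixes u v :: "real^('d::finite) \<Rightarrow> real"
  assumes "u differentiable (at x)" "v differentiable (at x)"
  shows "grad (\<lambda>y. u y + v y) x = grad u x + grad v x"
proof (rule grad_eqI)
  show "((\<lambda>y. u y + v y) has_derivative (\<lambda>h. (grad u x + grad v x) \<bullet> h)) (at x)"
    using has_derivative_add[OF has_derivative_grad[OF assms(1)] has_derivative_grad[OF assms(2)]]
    by (simp add: inner_add_left)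
qed

lemma grad_diff:
  fixes u v :: "real^('d::finite) \<Rightarrow> real"
  assumes "u differentiable (at x)" "v differentiable (at x)"
  shows "grad (\<lambda>y. u y - v y) x = grad u x - grad v x"
proof (rule grad_eqI)
  show "((\<lambda>y. u y - v y) has_derivative (\<lambda>h. (grad u x - grad v x) \<bullet> h)) (at x)"
    using has_derivative_diff[OF has_derivative_grad[OF assms(1)] has_derivative_grad[OF assms(2)]]
    by (simp add: inner_diff_left)
qed

lemma grad_cmult:
  fixes u :: "real^('d::finite) \<Rightarrow> real"
  assumes "u differentiable (at x)"
  shows "grad (\<lambda>y. c * u y) x = c *\<^sub>R grad u x"
proof (rule grad_eqI)
  show "((\<lambda>y. c * u y) has_derivative (\<lambda>h. (c *\<^sub>R grad u x) \<bullet> h)) (at x)"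
    using has_derivative_mult_right[OF has_derivative_grad[OF assms]] by simp
qed

lemma lipschitz_with_grad_bound:
  fixes u :: "real^('d::finite) \<Rightarrow> real"
  assumes "\<And>x. u differentiable (at x)" "\<And>x. norm (grad u x) \<le> B"
  shows "lipschitz_with u B"
  unfolding lipschitz_with_iff
proof (intro allI)
  fix x y
  have "norm (u x - u y) \<le> B * norm (x - y)"
  proof (rule differentiable_bound[of UNIV u "\<lambda>x h. grad u x \<bullet> h"])
    show "(u has_derivative (\<lambda>h. grad u x \<bullet> h)) (at x within UNIV)" for x
      using has_derivative_grad assms(1) by auto
    show "onorm (\<lambda>h. grad u x \<bullet> h) \<le> B" for x
    proof (rule onorm_le)
      show "norm (grad u x \<bullet> h) \<le> B * norm h" for h
        using Cauchy_Schwarz_ineq2[of "grad u x" h] assms(2)[of x]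
        by (simp add: mult_right_mono order_trans)
    qed
  qed auto
  then show "\<bar>u x - u y\<bar> \<le> B * dist x y" by (simp add: dist_norm)
qed

definition twice_differentiable :: "(real^('d::finite) \<Rightarrow> real) \<Rightarrow> bool" where
  "twice_differentiable u \<longleftrightarrow>
     (\<forall>x. u differentiable (at x)) \<and> (\<forall>x i. (\<lambda>y. grad u y $ i) differentiable (at x))"

lemma twice_differentiableD:
  "twice_differentiable u \<Longrightarrow> u differentiable (at x)"
  "twice_differentiable u \<Longrightarrow> (\<lambda>y. grad u y $ i) differentiable (at x)"
  unfolding twice_differentiable_def by blast+

lemma twice_differentiable_add:
  "twice_differentiable u \<Longrightarrow> twice_differentiable v \<Longrightarrow> twice_differentiable (\<lambda>y. u y + v y)"
  unfolding twice_differentiable_def by (simp add: grad_add)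

lemma twice_differentiable_cmult:
  "twice_differentiable u \<Longrightarrow> twice_differentiable (\<lambda>y. c * u y)"
  unfolding twice_differentiable_def by (simp add: grad_cmult)

lemma hess_add:
  assumes "twice_differentiable u" "twice_differentiable v"
  shows "hess (\<lambda>y. u y + v y) x = hess u x + hess v x"
  using assms by (simp add: hess_def vec_eq_iff grad_add twice_differentiableD)

lemma hess_diff:
  assumes "twice_differentiable u" "twice_differentiable v"
  shows "hess (\<lambda>y. u y - v y) x = hess u x - hess v x"
  using assms by (simp add: hess_def vec_eq_iff grad_diff twice_differentiableD)

lemma hess_cmult:
  assumes "twice_differentiable u"
  shows "hess (\<lambda>y. c * u y) x = c *\<^sub>R hess u x"
  using assms by (simp add: hess_def vec_eq_iff grad_cmult twice_differentiableD)


section \<open>Periodic functions\<close>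

lemma periodic_translate_int:
  assumes "periodic g"
  shows "g (x + of_int k *\<^sub>R axis i 1) = g x"
proof -
  have nat: "g (y + real n *\<^sub>R axis i 1) = g y" for y n
  proof (induction n)
    case (Suc n)
    have "g (y + real (Suc n) *\<^sub>R axis i 1) = g ((y + real n *\<^sub>R axis i 1) + axis i 1)"
      by (simp add: algebra_simps)
    with Suc assms show ?case unfolding periodic_def by simp
  qed simp
  show ?thesis
  proof (cases "k \<ge> 0")
    case True
    then show ?thesis using nat[of x "nat k"] by simp
  next
    case False
    then have "x = (x + of_int k *\<^sub>R axis i 1) + real (nat (- k)) *\<^sub>R axis i 1"
      by (simp add: algebra_simps)
    then show ?thesis using nat by metis
  qed
qed

lemma periodic_translate_lattice:
  assumes "periodic g" "finite S"
  shows "g (x + (\<Sum>i\<in>S. of_int (k i) *\<^sub>R axis i 1)) = g x"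
  using assms(2)
proof (induction S arbitrary: x rule: finite_induct)
  case (insert j S)
  have "g (x + (\<Sum>i\<in>insert j S. of_int (k i) *\<^sub>R axis i 1))
      = g ((x + (\<Sum>i\<in>S. of_int (k i) *\<^sub>R axis i 1)) + of_int (k j) *\<^sub>R axis j 1)"
    using insert by (simp add: algebra_simps)
  also have "\<dots> = g (x + (\<Sum>i\<in>S. of_int (k i) *\<^sub>R axis i 1))"
    by (rule periodic_translate_int[OF assms(1)])
  finally show ?case using insert by simp
qed simp

lemma periodic_range_unit_cube:
  fixes g :: "real^('d::finite) \<Rightarrow> 'b"
  assumes "periodic g"
  shows "range g \<subseteq> g ` cbox 0 1"
proof
  fix v assume "v \<in> range g"
  then obtain x where v: "v = g x" by auto
  define z :: "real^'d" where "z = (\<chi> i. of_int \<lfloor>x $ i\<rfloor>)"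
  have "g x = g ((x - z) + (\<Sum>i\<in>UNIV. of_int \<lfloor>x $ i\<rfloor> *\<^sub>R axis i 1))"
    using vec_basis_expansion[of z] unfolding z_def by simp
  also have "\<dots> = g (x - z)" by (rule periodic_translate_lattice[OF assms]) simp
  finally have "v = g (x - z)" using v by simp
  moreover have "x - z \<in> cbox 0 1" unfolding mem_box_cart z_def
    by (auto simp: of_int_floor_le) (smt (verit) real_of_int_floor_add_one_gt)
  ultimately show "v \<in> g ` cbox 0 1" by blast
qed

lemma periodic_norm_le_supnorm:
  fixes g :: "real^('d::finite) \<Rightarrow> 'b::real_normed_vector"
  assumes "periodic g" "continuous_on UNIV g"
  shows "norm (g x) \<le> supnorm g"
proof -
  have "compact (g ` cbox 0 1)" using assms(2)
    by (intro compact_continuous_image) (auto intro: continuous_on_subset)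
  then have "bounded (range g)"
    using periodic_range_unit_cube[OF assms(1)] bounded_subset compact_imp_bounded by blast
  then have "bdd_above (range (\<lambda>x. norm (g x)))"
    by (auto simp: bounded_iff intro: bdd_aboveI)
  then show ?thesis unfolding supnorm_def by (rule cSUP_upper[rotated]) simp
qed

lemma periodic_has_derivative_iff:
  fixes u :: "real^('d::finite) \<Rightarrow> 'b::real_normed_vector"
  assumes "\<And>y. u (y + e) = u y"
  shows "(u has_derivative D) (at (x + e)) \<longleftrightarrow> (u has_derivative D) (at x)"
proof
  assume "(u has_derivative D) (at (x + e))"
  moreover have "((\<lambda>y. y + e) has_derivative (\<lambda>h. h)) (at x)"
    by (auto intro!: derivative_eq_intros)
  ultimately have "((\<lambda>y. u (y + e)) has_derivative D) (at x)"
    using has_derivative_compose by fastforce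
  then show "(u has_derivative D) (at x)" using assms by simp
next
  assume "(u has_derivative D) (at x)"
  moreover have "((\<lambda>y. y - e) has_derivative (\<lambda>h. h)) (at (x + e))"
    by (auto intro!: derivative_eq_intros)
  ultimately have "((\<lambda>y. u (y - e)) has_derivative D) (at (x + e))"
    using has_derivative_compose by fastforce
  moreover have "u (y - e) = u y" for y using assms[of "y - e"] by simp
  ultimately show "(u has_derivative D) (at (x + e))" by simp
qed

lemma periodic_grad:
  fixes u :: "real^('d::finite) \<Rightarrow> real"
  assumes "periodic u"
  shows "periodic (grad u)"
  unfolding periodic_def
proof (intro allI)
  fix x i
  have "frechet_derivative u (at (x + axis i 1)) = frechet_derivative u (at x)"
    unfolding frechet_derivative_def
    using periodic_has_derivative_iff[of u "axis i 1" _ x] assms unfolding periodic_def by simp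
  then show "grad u (x + axis i 1) = grad u x" unfolding grad_def by simp
qed

lemma periodic_hess:
  fixes u :: "real^('d::finite) \<Rightarrow> real"
  assumes "periodic u"
  shows "periodic (hess u)"
proof -
  have "periodic (\<lambda>y. grad u y $ i)" for i
    using periodic_grad[OF assms] unfolding periodic_def by simp
  then have "periodic (grad (\<lambda>y. grad u y $ i))" for i using periodic_grad by blast
  then show ?thesis unfolding periodic_def hess_def by (simp add: vec_eq_iff)
qed


lemma C0_imp_holder_with:
  fixes g :: "real^('d::finite) \<Rightarrow> real"
  assumes "g \<in> C0 a" "0 < b" "b \<le> a"
  obtains K where "holder_with b g K"
proof -
  obtain C where C: "\<forall>x y. \<bar>g x - g y\<bar> \<le> C * dist x y powr a"
    using assms(1) unfolding C0_def holder_def by auto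
  have "holder_with a g (max C 0)"
    using C unfolding holder_with_def by (meson max.cobounded1 mult_right_mono order_trans powr_ge_zero)
  moreover have "bounded_by g (supnorm g)"
    using assms(1) periodic_norm_le_supnorm unfolding C0_def bounded_by_def by fastforce
  ultimately show ?thesis
    using holder_with_exponent_mono[OF assms(2,3)] that by (metis max.cobounded2)
qed

section \<open>The spaces \<open>C2 b\<close>\<close>

lemma holder_seminorm_bound:
  fixes g :: "real^('d::finite) \<Rightarrow> 'b::real_normed_vector"
  assumes "holder a g"
  shows "norm (g x - g y) \<le> holder_seminorm a g * dist x y powr a"
    and "0 \<le> holder_seminorm a g"
proof -
  obtain C where C: "\<forall>x y. norm (g x - g y) \<le> C * dist x y powr a"
    using assms unfolding holder_def by blast
  let ?q = "\<lambda>p::(real^'d) \<times> (real^'d). norm (g (fst p) - g (snd p)) / dist (fst p) (snd p) powr a"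
  have "bdd_above (?q ` {(x, y). x \<noteq> y})"
  proof (rule bdd_aboveI)
    fix r assume "r \<in> ?q ` {(x, y). x \<noteq> y}"
    then obtain p where p: "fst p \<noteq> snd p" "r = ?q p" by auto
    then have "dist (fst p) (snd p) powr a > 0" by simp
    then show "r \<le> C" using C p by (simp add: divide_le_eq)
  qed
  then have le: "?q p \<le> holder_seminorm a g" if "fst p \<noteq> snd p" for p
    unfolding holder_seminorm_def using that by (intro cSUP_upper) auto
  have "axis undefined 1 \<noteq> (0 :: real^'d)" by (simp add: axis_eq_0_iff)
  then show "0 \<le> holder_seminorm a g"
    using le[of "(axis undefined 1, 0)"] by (smt (verit) divide_nonneg_nonneg norm_ge_zero powr_ge_zero fst_conv snd_conv)
  show "norm (g x - g y) \<le> holder_seminorm a g * dist x y powr a"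
  proof (cases "x = y")
    case False
    then have "dist x y powr a > 0" by simp
    then show ?thesis using le[of "(x, y)"] False by (simp add: divide_le_eq)
  qed simp
qed

lemma norm_matrix_entry_le: "\<bar>(A::real^'n^'m) $ i $ j\<bar> \<le> norm A"
  using component_le_norm_cart[of "A $ i" j] Finite_Cartesian_Product.norm_nth_le[of A i] by linarith

locale C2_fun =
  fixes u :: "real^('d::finite) \<Rightarrow> real" and b :: real
  assumes mem: "u \<in> C2 b"
begin

lemma periodic: "periodic u"
  and differentiable: "u differentiable (at x)"
  and grad_differentiable: "(\<lambda>y. grad u y $ i) differentiable (at x)"
  and hess_continuous: "continuous_on UNIV (hess u)"
  and hess_holder: "holder b (hess u)"
  using mem unfolding C2_def by blast+

lemma twice_differentiable: "twice_differentiable u"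
  unfolding twice_differentiable_def using differentiable grad_differentiable by blast

lemma norm_bounds:
  shows "\<bar>u x\<bar> \<le> C2_norm b u" and "norm (grad u x) \<le> C2_norm b u"
    and "norm (hess u x) \<le> C2_norm b u" and "holder_seminorm b (hess u) \<le> C2_norm b u"
proof -
  have "continuous_on UNIV u"
    using differentiable by (auto intro: differentiable_imp_continuous_on simp: differentiable_on_def)
  then have su: "norm (u y) \<le> supnorm u" for y using periodic periodic_norm_le_supnorm by blast
  have "continuous_on UNIV (\<lambda>y. grad u y $ i)" for i
    using grad_differentiable by (auto intro: differentiable_imp_continuous_on simp: differentiable_on_def)
  then have "continuous_on UNIV (grad u)"
    using continuous_on_vec_lambda[of UNIV "\<lambda>i y. grad u y $ i"] by simp
  then have sg: "norm (grad u y) \<le> supnorm (grad u)" for y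
    using periodic_grad[OF periodic] periodic_norm_le_supnorm by blast
  have sh: "norm (hess u y) \<le> supnorm (hess u)" for y
    using periodic_hess[OF periodic] hess_continuous periodic_norm_le_supnorm by blast
  have nonneg: "0 \<le> supnorm u" "0 \<le> supnorm (grad u)" "0 \<le> supnorm (hess u)"
    "0 \<le> holder_seminorm b (hess u)"
    using su[of 0] sg[of 0] sh[of 0] holder_seminorm_bound(2)[OF hess_holder] by simp_all (meson norm_ge_zero order_trans)+
  show "\<bar>u x\<bar> \<le> C2_norm b u" "norm (grad u x) \<le> C2_norm b u" "norm (hess u x) \<le> C2_norm b u"
    "holder_seminorm b (hess u) \<le> C2_norm b u"
    using su[of x] sg[of x] sh[of x] nonneg unfolding C2_norm_def by simp_all
qed

lemma C2_norm_nonneg: "0 \<le> C2_norm b u"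
  using norm_bounds(1)[of 0] by simp

lemma bounded_by: "bounded_by u (C2_norm b u)"
  unfolding bounded_by_def using norm_bounds(1) by blast

lemma lipschitz: "lipschitz_with u (C2_norm b u)"
  using lipschitz_with_grad_bound[OF differentiable norm_bounds(2)] .

lemma bounded_by_grad: "bounded_by (\<lambda>y. grad u y $ i) (C2_norm b u)"
  unfolding bounded_by_def using norm_bounds(2) component_le_norm_cart order_trans by blast

lemma lipschitz_grad: "lipschitz_with (\<lambda>y. grad u y $ i) (C2_norm b u)"
proof (rule lipschitz_with_grad_bound[OF grad_differentiable])
  show "norm (grad (\<lambda>y. grad u y $ i) x) \<le> C2_norm b u" for x
    using norm_bounds(3)[of x] Finite_Cartesian_Product.norm_nth_le[of "hess u x" i] unfolding hess_def by simp
qed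

lemma bounded_by_hess: "bounded_by (\<lambda>y. hess u y $ i $ i) (C2_norm b u)"
  unfolding bounded_by_def using norm_bounds(3) norm_matrix_entry_le order_trans by blast

lemma holder_hess: "holder_with b (\<lambda>y. hess u y $ i $ i) (C2_norm b u)"
  unfolding holder_with_def
proof (intro allI)
  fix x y
  have "\<bar>hess u x $ i $ i - hess u y $ i $ i\<bar> \<le> norm (hess u x - hess u y)"
    using norm_matrix_entry_le[of "hess u x - hess u y" i i] by simp
  also have "\<dots> \<le> holder_seminorm b (hess u) * dist x y powr b"
    by (rule holder_seminorm_bound(1)[OF hess_holder])
  also have "\<dots> \<le> C2_norm b u * dist x y powr b"
    by (intro mult_right_mono norm_bounds(4)) simp
  finally show "\<bar>hess u x $ i $ i - hess u y $ i $ i\<bar> \<le> C2_norm b u * dist x y powr b" .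
qed

end

lemma holder_add: "holder a g \<Longrightarrow> holder a h \<Longrightarrow> holder a (\<lambda>x. g x + h x)"
  unfolding holder_def
proof (elim exE, intro exI allI)
  fix C D x y
  assume "\<forall>x y. norm (g x - g y) \<le> C * dist x y powr a" "\<forall>x y. norm (h x - h y) \<le> D * dist x y powr a"
  then have "norm ((g x - g y) + (h x - h y)) \<le> C * dist x y powr a + D * dist x y powr a"
    by (meson add_mono norm_triangle_le)
  then show "norm ((g x + h x) - (g y + h y)) \<le> (C + D) * dist x y powr a"
    by (simp add: algebra_simps)
qed

lemma holder_scaleR: "holder a g \<Longrightarrow> holder a (\<lambda>x. c *\<^sub>R g x)"
  unfolding holder_def
proof (elim exE, intro exI allI)
  fix C x y
  assume "\<forall>x y. norm (g x - g y) \<le> C * dist x y powr a"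
  then have "\<bar>c\<bar> * norm (g x - g y) \<le> \<bar>c\<bar> * (C * dist x y powr a)"
    by (simp add: mult_left_mono)
  then show "norm (c *\<^sub>R g x - c *\<^sub>R g y) \<le> (\<bar>c\<bar> * C) * dist x y powr a"
    by (simp add: scaleR_diff_right[symmetric] mult.assoc del: scaleR_diff_right)
qed

lemma C2_add:
  assumes "u \<in> C2 b" "v \<in> C2 b"
  shows "(\<lambda>x. u x + v x) \<in> C2 b"
proof -
  interpret U: C2_fun u b by (rule C2_fun.intro) fact
  interpret V: C2_fun v b by (rule C2_fun.intro) fact
  have "(\<lambda>y. grad (\<lambda>x. u x + v x) y $ i) = (\<lambda>y. grad u y $ i + grad v y $ i)" for i
    by (simp add: grad_add U.differentiable V.differentiable)
  moreover have "hess (\<lambda>x. u x + v x) = (\<lambda>x. hess u x + hess v x)"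
    by (simp add: fun_eq_iff hess_add U.twice_differentiable V.twice_differentiable)
  ultimately show ?thesis
    using U.periodic V.periodic unfolding C2_def periodic_def
    by (auto intro!: differentiable_add continuous_on_add holder_add U.differentiable V.differentiable
      U.grad_differentiable V.grad_differentiable U.hess_continuous V.hess_continuous
      U.hess_holder V.hess_holder)
qed

lemma C2_cmult:
  assumes "u \<in> C2 b"
  shows "(\<lambda>x. c * u x) \<in> C2 b"
proof -
  interpret U: C2_fun u b by (rule C2_fun.intro) fact
  have "(\<lambda>y. grad (\<lambda>x. c * u x) y $ i) = (\<lambda>y. c * grad u y $ i)" for i
    by (simp add: grad_cmult U.differentiable)
  moreover have "hess (\<lambda>x. c * u x) = (\<lambda>x. c *\<^sub>R hess u x)"
    by (simp add: fun_eq_iff hess_cmult U.twice_differentiable)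
  ultimately show ?thesis
    using U.periodic unfolding C2_def periodic_def
    by (auto intro!: differentiable_mult differentiable_const continuous_on_scaleR continuous_on_const
      holder_scaleR U.differentiable U.grad_differentiable U.hess_continuous U.hess_holder)
qed

lemma C2_diff:
  assumes "u \<in> C2 b" "v \<in> C2 b"
  shows "(\<lambda>x. u x - v x) \<in> C2 b"
  using C2_add[OF assms(1) C2_cmult[OF assms(2), of "-1"]] by simp


section \<open>The bilinear terms of \<open>G\<close>\<close>

definition grad_dot :: "(real^('d::finite) \<Rightarrow> real) \<Rightarrow> (real^'d \<Rightarrow> real) \<Rightarrow> real^'d \<Rightarrow> real" where
  "grad_dot u v x = (\<Sum>i\<in>UNIV. grad u x $ i * grad v x $ i)"

definition div_flux :: "(real^('d::finite) \<Rightarrow> real) \<Rightarrow> (real^'d \<Rightarrow> real) \<Rightarrow> real^'d \<Rightarrow> real" where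
  "div_flux r u x = (\<Sum>i\<in>UNIV. grad r x $ i * grad u x $ i + r x * hess u x $ i $ i)"

lemma inner_grad_eq_grad_dot: "grad u x \<bullet> grad v x = grad_dot u v x"
  unfolding grad_dot_def by (simp add: inner_vec_def)

lemma norm_grad_square: "(norm (grad u x))\<^sup>2 = grad_dot u u x"
  by (simp add: power2_norm_eq_inner inner_grad_eq_grad_dot)

lemma diverg_scaleR_grad:
  assumes "twice_differentiable u" "\<And>x. r differentiable (at x)"
  shows "diverg (\<lambda>y. r y *\<^sub>R grad u y) x = div_flux r u x"
proof -
  have "frechet_derivative (\<lambda>y. r y * grad u y $ i) (at x)
      = (\<lambda>h. r x * (grad (\<lambda>y. grad u y $ i) x \<bullet> h) + (grad r x \<bullet> h) * grad u x $ i)" for i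
    by (intro frechet_derivative_at[symmetric] has_derivative_mult has_derivative_grad assms
        twice_differentiableD)
  then show ?thesis unfolding diverg_def div_flux_def
    by (simp add: hess_def cart_eq_inner_axis[symmetric] algebra_simps)
qed

lemma grad_dot_commute: "grad_dot u v x = grad_dot v u x"
  unfolding grad_dot_def by (simp add: mult.commute)

context
  fixes u v w :: "real^('d::finite) \<Rightarrow> real"
  assumes v: "\<And>x. v differentiable (at x)" and w: "\<And>x. w differentiable (at x)"
begin

lemma grad_dot_add_right: "grad_dot u (\<lambda>x. v x + w x) x = grad_dot u v x + grad_dot u w x"
  unfolding grad_dot_def by (simp add: grad_add v w sum.distrib algebra_simps)

lemma grad_dot_add_left: "grad_dot (\<lambda>x. v x + w x) u x = grad_dot v u x + grad_dot w u x"
  unfolding grad_dot_def by (simp add: grad_add v w sum.distrib algebra_simps)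

lemma grad_dot_diff_left: "grad_dot (\<lambda>x. v x - w x) u x = grad_dot v u x - grad_dot w u x"
  unfolding grad_dot_def by (simp add: grad_diff v w sum_subtractf algebra_simps)

lemma div_flux_add_left: "div_flux (\<lambda>x. v x + w x) u x = div_flux v u x + div_flux w u x"
  unfolding div_flux_def by (simp add: grad_add v w sum.distrib algebra_simps)

lemma div_flux_diff_left: "div_flux (\<lambda>x. v x - w x) u x = div_flux v u x - div_flux w u x"
  unfolding div_flux_def by (simp add: grad_diff v w sum_subtractf algebra_simps)

end

lemma grad_dot_cmult_right:
  "(\<And>x. v differentiable (at x)) \<Longrightarrow> grad_dot u (\<lambda>x. c * v x) x = c * grad_dot u v x"
  unfolding grad_dot_def by (simp add: grad_cmult sum_distrib_left algebra_simps)

lemma div_flux_cmult_left: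
  "(\<And>x. r differentiable (at x)) \<Longrightarrow> div_flux (\<lambda>x. c * r x) u x = c * div_flux r u x"
  unfolding div_flux_def by (simp add: grad_cmult sum_distrib_left algebra_simps)

lemma div_flux_add_right:
  "twice_differentiable v \<Longrightarrow> twice_differentiable w \<Longrightarrow>
    div_flux r (\<lambda>x. v x + w x) x = div_flux r v x + div_flux r w x"
  unfolding div_flux_def
  by (simp add: grad_add hess_add twice_differentiableD sum.distrib algebra_simps)

lemma div_flux_diff_right:
  "twice_differentiable v \<Longrightarrow> twice_differentiable w \<Longrightarrow>
    div_flux r (\<lambda>x. v x - w x) x = div_flux r v x - div_flux r w x"
  unfolding div_flux_def
  by (simp add: grad_diff hess_diff twice_differentiableD sum_subtractf algebra_simps)

lemma div_flux_cmult_right: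
  "twice_differentiable v \<Longrightarrow> div_flux r (\<lambda>x. c * v x) x = c * div_flux r v x"
  unfolding div_flux_def
  by (simp add: grad_cmult hess_cmult twice_differentiableD sum_distrib_left algebra_simps)

lemma periodic_grad_dot: "periodic u \<Longrightarrow> periodic v \<Longrightarrow> periodic (grad_dot u v)"
  using periodic_grad[of u] periodic_grad[of v] unfolding periodic_def grad_dot_def by simp

lemma periodic_div_flux: "periodic r \<Longrightarrow> periodic u \<Longrightarrow> periodic (div_flux r u)"
  using periodic_grad[of r] periodic_grad[of u] periodic_hess[of u]
  unfolding periodic_def div_flux_def by simp

lemma grad_dot_bounds:
  fixes u v :: "real^('d::finite) \<Rightarrow> real"
  assumes "u \<in> C2 b" "v \<in> C2 c"
  shows "bounded_by (grad_dot u v) (CARD('d) * (C2_norm b u * C2_norm c v))"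
    and "lipschitz_with (grad_dot u v) (CARD('d) * (2 * C2_norm b u * C2_norm c v))"
proof -
  interpret U: C2_fun u b by (rule C2_fun.intro) fact
  interpret V: C2_fun v c by (rule C2_fun.intro) fact
  have "bounded_by (grad_dot u v) (\<Sum>i\<in>(UNIV::'d set). C2_norm b u * C2_norm c v)"
    unfolding grad_dot_def[abs_def]
    by (intro bounded_by_sum bounded_by_mult U.bounded_by_grad V.bounded_by_grad) simp
  then show "bounded_by (grad_dot u v) (CARD('d) * (C2_norm b u * C2_norm c v))" by simp
  have "lipschitz_with (grad_dot u v)
      (\<Sum>i\<in>(UNIV::'d set). C2_norm b u * C2_norm c v + C2_norm c v * C2_norm b u)"
    unfolding grad_dot_def[abs_def]
    by (intro holder_with_sum holder_with_mult U.bounded_by_grad V.bounded_by_grad U.lipschitz_grad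
        V.lipschitz_grad) simp
  then show "lipschitz_with (grad_dot u v) (CARD('d) * (2 * C2_norm b u * C2_norm c v))"
    by (simp add: algebra_simps)
qed

text \<open>Only second derivatives of \<open>u\<close> occur, so no condition relates \<open>a\<close> to the exponent \<open>c\<close> of \<open>r\<close>.\<close>

lemma div_flux_bounds:
  fixes r u :: "real^('d::finite) \<Rightarrow> real"
  assumes r: "r \<in> C2 c" and u: "u \<in> C2 b" and a: "0 < a" "a \<le> b" "a \<le> 1"
  shows "bounded_by (div_flux r u) (CARD('d) * (2 * C2_norm c r * C2_norm b u))"
    and "holder_with a (div_flux r u) (CARD('d) * (10 * C2_norm c r * C2_norm b u))"
proof -
  interpret R: C2_fun r c by (rule C2_fun.intro) fact
  interpret U: C2_fun u b by (rule C2_fun.intro) fact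
  define Nr where "Nr = C2_norm c r"
  define Nu where "Nu = C2_norm b u"
  have N0: "0 \<le> Nr" "0 \<le> Nu" unfolding Nr_def Nu_def by (fact R.C2_norm_nonneg U.C2_norm_nonneg)+
  have hgg: "holder_with a (\<lambda>x. grad r x $ i * grad u x $ i) (4 * Nr * Nu)" for i
  proof -
    have "bounded_by (\<lambda>x. grad r x $ i * grad u x $ i) (Nr * Nu)"
      unfolding Nr_def Nu_def by (intro bounded_by_mult R.bounded_by_grad U.bounded_by_grad)
    moreover have "lipschitz_with (\<lambda>x. grad r x $ i * grad u x $ i) (Nr * Nu + Nu * Nr)"
      unfolding Nr_def Nu_def
      by (intro holder_with_mult R.bounded_by_grad U.bounded_by_grad R.lipschitz_grad U.lipschitz_grad)
    ultimately show ?thesis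
      using holder_with_exponent_mono[OF a(1) a(3)] N0 by (force simp: algebra_simps)
  qed
  have hrh: "holder_with a (\<lambda>x. r x * hess u x $ i $ i) (Nr * (3 * Nu) + Nu * (3 * Nr))" for i
  proof (intro holder_with_mult R.bounded_by[folded Nr_def] U.bounded_by_hess[folded Nu_def])
    show "holder_with a r (3 * Nr)"
      using holder_with_exponent_mono[OF a(1) a(3) R.bounded_by R.lipschitz R.C2_norm_nonneg]
      by (simp add: Nr_def)
    show "holder_with a (\<lambda>x. hess u x $ i $ i) (3 * Nu)"
      using holder_with_exponent_mono[OF a(1) a(2) U.bounded_by_hess U.holder_hess U.C2_norm_nonneg]
      by (simp add: Nu_def)
  qed
  have "bounded_by (div_flux r u) (\<Sum>i\<in>(UNIV::'d set). Nr * Nu + Nr * Nu)"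
    unfolding div_flux_def[abs_def] Nr_def Nu_def
    by (intro bounded_by_sum bounded_by_add bounded_by_mult R.bounded_by_grad U.bounded_by_grad
        R.bounded_by U.bounded_by_hess) simp
  then show "bounded_by (div_flux r u) (CARD('d) * (2 * C2_norm c r * C2_norm b u))"
    by (simp add: Nr_def Nu_def algebra_simps)
  have "holder_with a (div_flux r u) (\<Sum>i\<in>(UNIV::'d set). 4 * Nr * Nu + (Nr * (3 * Nu) + Nu * (3 * Nr)))"
    unfolding div_flux_def[abs_def] by (intro holder_with_sum holder_with_add hgg hrh) simp
  then show "holder_with a (div_flux r u) (CARD('d) * (10 * C2_norm c r * C2_norm b u))"
    by (simp add: Nr_def Nu_def algebra_simps)
qed


lemma div_flux_sum_bounds:
  fixes u v r m :: "real^('d::finite) \<Rightarrow> real"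
  assumes "u \<in> C2 b" "v \<in> C2 b" "r \<in> C2 c" "m \<in> C2 c" "0 < b" "b \<le> 1"
  shows "bounded_by (\<lambda>x. - div_flux r u x - div_flux m v x)
      (CARD('d) * (2 * C2_norm c r * C2_norm b u) + CARD('d) * (2 * C2_norm c m * C2_norm b v))"
    and "holder_with b (\<lambda>x. - div_flux r u x - div_flux m v x)
      (CARD('d) * (10 * C2_norm c r * C2_norm b u) + CARD('d) * (10 * C2_norm c m * C2_norm b v))"
  by (intro bounded_by_diff bounded_by_uminus div_flux_bounds(1)[OF _ _ assms(5) order_refl assms(6)] assms)
    (intro holder_with_diff holder_with_uminus div_flux_bounds(2)[OF _ _ assms(5) order_refl assms(6)] assms)

section \<open>Real functions with two derivatives\<close>

lemma DERIV_abs_diff_le: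
  fixes g g' :: "real \<Rightarrow> real"
  assumes d: "\<And>x. DERIV g x :> g' x"
    and bound: "\<And>t. min a b \<le> t \<Longrightarrow> t \<le> max a b \<Longrightarrow> \<bar>g' t\<bar> \<le> B"
  shows "\<bar>g a - g b\<bar> \<le> B * \<bar>a - b\<bar>"
proof -
  have ordered: "\<bar>g y - g x\<bar> \<le> B * (y - x)"
    if "x < y" "\<And>t. x \<le> t \<Longrightarrow> t \<le> y \<Longrightarrow> \<bar>g' t\<bar> \<le> B" for x y
  proof -
    obtain z where z: "x < z" "z < y" "g y - g x = (y - x) * g' z" using MVT2[OF \<open>x < y\<close> d] by blast
    then have "\<bar>g y - g x\<bar> = (y - x) * \<bar>g' z\<bar>" using \<open>x < y\<close> by (simp add: abs_mult)
    also have "\<dots> \<le> (y - x) * B" using that z by (intro mult_left_mono) auto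
    finally show ?thesis by (simp add: mult.commute)
  qed
  consider "a < b" | "a = b" | "b < a" by linarith
  then show ?thesis
    by cases (use ordered[of a b] ordered[of b a] bound in \<open>auto simp: abs_minus_commute\<close>)
qed

lemma DERIV_abs_diff_le_interval:
  fixes g g' :: "real \<Rightarrow> real"
  assumes "\<And>x. DERIV g x :> g' x" "\<And>t. \<bar>t\<bar> \<le> R \<Longrightarrow> \<bar>g' t\<bar> \<le> B" "\<bar>a\<bar> \<le> R" "\<bar>b\<bar> \<le> R"
  shows "\<bar>g a - g b\<bar> \<le> B * \<bar>a - b\<bar>"
  using assms by (intro DERIV_abs_diff_le) (auto simp: min_def max_def split: if_splits)

lemma lipschitz_with_compose_DERIV:
  fixes g g' :: "real \<Rightarrow> real" and m :: "'a::metric_space \<Rightarrow> real"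
  assumes "\<And>x. DERIV g x :> g' x" "\<And>t. \<bar>t\<bar> \<le> R \<Longrightarrow> \<bar>g' t\<bar> \<le> K" "0 \<le> K"
    and "bounded_by m R" "lipschitz_with m L"
  shows "lipschitz_with (\<lambda>x. g (m x)) (K * L)"
  unfolding lipschitz_with_iff
proof (intro allI)
  fix x y
  have "\<bar>g (m x) - g (m y)\<bar> \<le> K * \<bar>m x - m y\<bar>"
    using assms(4) unfolding bounded_by_def by (intro DERIV_abs_diff_le_interval[OF assms(1,2)]) auto
  also have "\<dots> \<le> K * (L * dist x y)"
    using assms(3,5) unfolding lipschitz_with_iff by (intro mult_left_mono) auto
  finally show "\<bar>g (m x) - g (m y)\<bar> \<le> K * L * dist x y" by simp
qed

lemma continuous_bound_on_interval:
  fixes g :: "real \<Rightarrow> real"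
  assumes "continuous_on UNIV g"
  obtains K where "0 \<le> K" "\<And>t. \<bar>t\<bar> \<le> R \<Longrightarrow> \<bar>g t\<bar> \<le> K"
proof -
  have "compact (g ` {-R..R})"
    using assms by (intro compact_continuous_image) (auto intro: continuous_on_subset)
  then obtain B where "\<forall>y\<in>g ` {-R..R}. \<bar>y\<bar> \<le> B"
    using compact_imp_bounded bounded_iff by (metis real_norm_def)
  then show ?thesis by (intro that[of "max B 0"]) (auto simp: abs_le_iff intro: le_max_iff_disj[THEN iffD2])
qed

lemma continuous_modulus_on_interval:
  fixes g :: "real \<Rightarrow> real"
  assumes "continuous_on UNIV g" "0 < e"
  obtains \<delta> where "0 < \<delta>" "\<delta> \<le> 1" "\<And>c s. \<bar>c\<bar> \<le> R \<Longrightarrow> \<bar>s\<bar> \<le> \<delta> \<Longrightarrow> \<bar>g (c + s) - g c\<bar> \<le> e"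
proof -
  have "uniformly_continuous_on {-R-1..R+1} g"
    using assms(1) by (intro compact_uniformly_continuous) (auto intro: continuous_on_subset)
  then obtain d where d: "d > 0"
    "\<forall>x\<in>{-R-1..R+1}. \<forall>x'\<in>{-R-1..R+1}. dist x' x < d \<longrightarrow> dist (g x') (g x) < e"
    using assms(2) unfolding uniformly_continuous_on_def by blast
  show ?thesis
  proof (rule that[of "min 1 (d/2)"])
    show "\<bar>g (c + s) - g c\<bar> \<le> e" if "\<bar>c\<bar> \<le> R" "\<bar>s\<bar> \<le> min 1 (d/2)" for c s
    proof -
      have "c \<in> {-R-1..R+1}" "c + s \<in> {-R-1..R+1}" "dist (c + s) c < d"
        using that d(1) by (auto simp: dist_real_def abs_le_iff)
      then show ?thesis using d(2) by (fastforce simp: dist_real_def)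
    qed
  qed (use d in auto)
qed

lemma DERIV_translate:
  assumes "\<And>x. DERIV G x :> G' x"
  shows "DERIV (\<lambda>s. G (s + c)) s :> G' (s + c)" and "DERIV (\<lambda>s. G (c + s)) s :> G' (c + s)"
proof -
  have "DERIV (\<lambda>s. s + c) s :> 1" "DERIV (\<lambda>s. c + s) s :> 1"
    by (auto intro!: derivative_eq_intros)
  from this[THEN DERIV_chain2[OF assms]]
  show "DERIV (\<lambda>s. G (s + c)) s :> G' (s + c)" "DERIV (\<lambda>s. G (c + s)) s :> G' (c + s)" by simp_all
qed

locale twice_DERIV =
  fixes F F' F'' :: "real \<Rightarrow> real"
  assumes DERIV_F: "\<And>x. DERIV F x :> F' x" and DERIV_F': "\<And>x. DERIV F' x :> F'' x"
begin

lemma DERIV_shifted: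
  "DERIV (\<lambda>s. F (c + s) - F' c * s) s :> F' (c + s) - F' c"
  "DERIV (\<lambda>s. F' (c + s) - F'' c * s) s :> F'' (c + s) - F'' c"
  "DERIV (\<lambda>c. F (c + t) - F c - F' c * t) c :> F' (c + t) - F' c - F'' c * t"
  "DERIV (\<lambda>c. F' (c + t) - F' c) c :> F'' (c + t) - F'' c"
  using DERIV_diff[OF DERIV_translate(2)[OF DERIV_F] DERIV_cmult[OF DERIV_ident]]
    DERIV_diff[OF DERIV_translate(2)[OF DERIV_F'] DERIV_cmult[OF DERIV_ident]]
    DERIV_diff[OF DERIV_diff[OF DERIV_translate(1)[OF DERIV_F] DERIV_F] DERIV_cmult_right[OF DERIV_F']]
    DERIV_diff[OF DERIV_translate(1)[OF DERIV_F'] DERIV_F']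
  by simp_all

text \<open>Below, \<open>\<omega>\<close> bounds the oscillation of \<open>F''\<close> over increments of size \<open>S\<close>, and \<open>K\<close> bounds
  \<open>F''\<close> itself on \<open>[-R-S, R+S]\<close>.\<close>

lemma deriv_linearization_le:
  assumes osc: "\<And>c s. \<bar>c\<bar> \<le> R \<Longrightarrow> \<bar>s\<bar> \<le> S \<Longrightarrow> \<bar>F'' (c + s) - F'' c\<bar> \<le> \<omega>"
    and "\<bar>c\<bar> \<le> R" "\<bar>s\<bar> \<le> S"
  shows "\<bar>F' (c + s) - F' c - F'' c * s\<bar> \<le> \<omega> * \<bar>s\<bar>"
proof -
  have "\<bar>(F' (c + s) - F'' c * s) - (F' (c + 0) - F'' c * 0)\<bar> \<le> \<omega> * \<bar>s - 0\<bar>"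
    by (rule DERIV_abs_diff_le[OF DERIV_shifted(2)])
      (rule osc, use assms(2,3) in \<open>auto simp: min_def max_def split: if_splits\<close>)
  then show ?thesis by simp
qed

lemma remainder_lipschitz_in_increment:
  assumes K: "\<And>t. \<bar>t\<bar> \<le> R + S \<Longrightarrow> \<bar>F'' t\<bar> \<le> K" "0 \<le> K"
    and "\<bar>a\<bar> \<le> R" "\<bar>t\<bar> \<le> S" "\<bar>t'\<bar> \<le> S"
  shows "\<bar>(F (a + t) - F a - F' a * t) - (F (a + t') - F a - F' a * t')\<bar> \<le> K * S * \<bar>t - t'\<bar>"
proof -
  have "\<bar>(F (a + t) - F' a * t) - (F (a + t') - F' a * t')\<bar> \<le> (K * S) * \<bar>t - t'\<bar>"
  proof (rule DERIV_abs_diff_le[OF DERIV_shifted(1)])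
    fix \<sigma> assume "min t t' \<le> \<sigma>" "\<sigma> \<le> max t t'"
    then have \<sigma>: "\<bar>\<sigma>\<bar> \<le> S" using assms(4,5) by (auto simp: min_def max_def split: if_splits)
    have "\<bar>F' (a + \<sigma>) - F' a\<bar> \<le> K * \<bar>(a + \<sigma>) - a\<bar>"
      by (rule DERIV_abs_diff_le_interval[OF DERIV_F', where R = "R + S" and B = K, OF K(1)])
        (use assms(3) \<sigma> abs_triangle_ineq[of a \<sigma>] in linarith)+
    also have "\<dots> \<le> K * S" using \<sigma> K(2) by (simp add: mult_left_mono)
    finally show "\<bar>F' (a + \<sigma>) - F' a\<bar> \<le> K * S" .
  qed
  then show ?thesis by (simp add: algebra_simps)
qed

lemma remainder_lipschitz_in_base:
  assumes osc: "\<And>c s. \<bar>c\<bar> \<le> R \<Longrightarrow> \<bar>s\<bar> \<le> S \<Longrightarrow> \<bar>F'' (c + s) - F'' c\<bar> \<le> \<omega>" "0 \<le> \<omega>"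
    and "\<bar>a\<bar> \<le> R" "\<bar>a'\<bar> \<le> R" "\<bar>t\<bar> \<le> S"
  shows "\<bar>(F (a + t) - F a - F' a * t) - (F (a' + t) - F a' - F' a' * t)\<bar> \<le> \<omega> * S * \<bar>a - a'\<bar>"
proof (rule DERIV_abs_diff_le[OF DERIV_shifted(3)])
  fix c assume "min a a' \<le> c" "c \<le> max a a'"
  then have "\<bar>c\<bar> \<le> R" using assms(3,4) by (auto simp: min_def max_def split: if_splits)
  have "\<bar>F' (c + t) - F' c - F'' c * t\<bar> \<le> \<omega> * \<bar>t\<bar>"
    by (rule deriv_linearization_le[OF osc(1) \<open>\<bar>c\<bar> \<le> R\<close> assms(5)])
  also have "\<dots> \<le> \<omega> * S" using assms(5) osc(2) by (simp add: mult_left_mono)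
  finally show "\<bar>F' (c + t) - F' c - F'' c * t\<bar> \<le> \<omega> * S" .
qed

lemma deriv_increment_lipschitz_in_base:
  assumes osc: "\<And>c s. \<bar>c\<bar> \<le> R \<Longrightarrow> \<bar>s\<bar> \<le> S \<Longrightarrow> \<bar>F'' (c + s) - F'' c\<bar> \<le> \<omega>"
    and "\<bar>a\<bar> \<le> R" "\<bar>a'\<bar> \<le> R" "\<bar>t\<bar> \<le> S"
  shows "\<bar>(F' (a + t) - F' a) - (F' (a' + t) - F' a')\<bar> \<le> \<omega> * \<bar>a - a'\<bar>"
proof (rule DERIV_abs_diff_le[OF DERIV_shifted(4)])
  fix c assume "min a a' \<le> c" "c \<le> max a a'"
  then have "\<bar>c\<bar> \<le> R" using assms(2,3) by (auto simp: min_def max_def split: if_splits)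
  then show "\<bar>F'' (c + t) - F'' c\<bar> \<le> \<omega>" using osc assms(4) by blast
qed

context
  fixes m r :: "'a::metric_space \<Rightarrow> real" and R S Lm Lr K \<omega> :: real
  assumes m: "bounded_by m R" "lipschitz_with m Lm" and r: "bounded_by r S" "lipschitz_with r Lr"
    and K: "\<And>t. \<bar>t\<bar> \<le> R + S \<Longrightarrow> \<bar>F'' t\<bar> \<le> K" "0 \<le> K"
    and osc: "\<And>c s. \<bar>c\<bar> \<le> R \<Longrightarrow> \<bar>s\<bar> \<le> S \<Longrightarrow> \<bar>F'' (c + s) - F'' c\<bar> \<le> \<omega>" "0 \<le> \<omega>"
begin

lemma compose_bounds:
  shows "\<bar>m x\<bar> \<le> R" "\<bar>r x\<bar> \<le> S" "0 \<le> S"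
    and "\<bar>m x - m y\<bar> \<le> Lm * dist x y" "\<bar>r x - r y\<bar> \<le> Lr * dist x y"
  using m r bounded_by_nonneg[OF r(1)] unfolding bounded_by_def lipschitz_with_iff by blast+

lemma remainder_compose_bounds:
  shows "bounded_by (\<lambda>x. F (m x + r x) - F (m x) - F' (m x) * r x) (K * S * S)"
    and "lipschitz_with (\<lambda>x. F (m x + r x) - F (m x) - F' (m x) * r x) (\<omega> * S * Lm + K * S * Lr)"
proof -
  show "bounded_by (\<lambda>x. F (m x + r x) - F (m x) - F' (m x) * r x) (K * S * S)"
    unfolding bounded_by_def
  proof
    fix x
    have "\<bar>(F (m x + r x) - F (m x) - F' (m x) * r x) - (F (m x + 0) - F (m x) - F' (m x) * 0)\<bar>
        \<le> K * S * \<bar>r x - 0\<bar>"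
      using compose_bounds by (intro remainder_lipschitz_in_increment[OF K]) auto
    also have "\<dots> \<le> K * S * S" using compose_bounds K(2) by (simp add: mult_left_mono)
    finally show "\<bar>F (m x + r x) - F (m x) - F' (m x) * r x\<bar> \<le> K * S * S" by simp
  qed
  show "lipschitz_with (\<lambda>x. F (m x + r x) - F (m x) - F' (m x) * r x) (\<omega> * S * Lm + K * S * Lr)"
    unfolding lipschitz_with_iff
  proof (intro allI)
    fix x y
    have "\<bar>(F (m x + r x) - F (m x) - F' (m x) * r x) - (F (m y + r x) - F (m y) - F' (m y) * r x)\<bar>
        \<le> \<omega> * S * \<bar>m x - m y\<bar>"
      using compose_bounds by (intro remainder_lipschitz_in_base[OF osc])
    moreover have "\<bar>(F (m y + r x) - F (m y) - F' (m y) * r x) - (F (m y + r y) - F (m y) - F' (m y) * r y)\<bar>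
        \<le> K * S * \<bar>r x - r y\<bar>"
      using compose_bounds by (intro remainder_lipschitz_in_increment[OF K])
    moreover have "\<omega> * S * \<bar>m x - m y\<bar> \<le> \<omega> * S * (Lm * dist x y)"
      and "K * S * \<bar>r x - r y\<bar> \<le> K * S * (Lr * dist x y)"
      using compose_bounds K(2) osc(2) by (intro mult_left_mono; simp)+
    ultimately show "\<bar>(F (m x + r x) - F (m x) - F' (m x) * r x) - (F (m y + r y) - F (m y) - F' (m y) * r y)\<bar>
        \<le> (\<omega> * S * Lm + K * S * Lr) * dist x y"
      by (simp add: algebra_simps)
  qed
qed

lemma deriv_increment_compose_bounds:
  shows "bounded_by (\<lambda>x. F' (m x + r x) - F' (m x)) (K * S)"
    and "lipschitz_with (\<lambda>x. F' (m x + r x) - F' (m x)) (\<omega> * Lm + K * Lr)"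
proof -
  have F'_diff: "\<bar>F' (m x + s) - F' (m x + s')\<bar> \<le> K * \<bar>s - s'\<bar>" if "\<bar>s\<bar> \<le> S" "\<bar>s'\<bar> \<le> S" for x s s'
  proof -
    have "\<bar>F' (m x + s) - F' (m x + s')\<bar> \<le> K * \<bar>(m x + s) - (m x + s')\<bar>"
      by (rule DERIV_abs_diff_le_interval[OF DERIV_F', where R = "R + S" and B = K, OF K(1)])
        (use that compose_bounds(1)[of x] abs_triangle_ineq in \<open>smt (verit)\<close>)+
    then show ?thesis by simp
  qed
  show "bounded_by (\<lambda>x. F' (m x + r x) - F' (m x)) (K * S)"
    unfolding bounded_by_def
  proof
    fix x
    have "\<bar>F' (m x + r x) - F' (m x + 0)\<bar> \<le> K * \<bar>r x - 0\<bar>"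
      using compose_bounds by (intro F'_diff) auto
    also have "\<dots> \<le> K * S" using compose_bounds K(2) by (simp add: mult_left_mono)
    finally show "\<bar>F' (m x + r x) - F' (m x)\<bar> \<le> K * S" by simp
  qed
  show "lipschitz_with (\<lambda>x. F' (m x + r x) - F' (m x)) (\<omega> * Lm + K * Lr)"
    unfolding lipschitz_with_iff
  proof (intro allI)
    fix x y
    have "\<bar>(F' (m x + r x) - F' (m x)) - (F' (m y + r x) - F' (m y))\<bar> \<le> \<omega> * \<bar>m x - m y\<bar>"
      using compose_bounds by (intro deriv_increment_lipschitz_in_base[OF osc(1)])
    moreover have "\<bar>F' (m y + r x) - F' (m y + r y)\<bar> \<le> K * \<bar>r x - r y\<bar>"
      using compose_bounds by (intro F'_diff)
    moreover have "\<omega> * \<bar>m x - m y\<bar> \<le> \<omega> * (Lm * dist x y)"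
      and "K * \<bar>r x - r y\<bar> \<le> K * (Lr * dist x y)"
      using compose_bounds K(2) osc(2) by (intro mult_left_mono; simp)+
    ultimately show "\<bar>(F' (m x + r x) - F' (m x)) - (F' (m y + r y) - F' (m y))\<bar>
        \<le> (\<omega> * Lm + K * Lr) * dist x y"
      by (simp add: algebra_simps)
  qed
qed

end

end


section \<open>The map \<open>G\<close> and its derivative\<close>

lemma Xsp_memD:
  assumes "p \<in> Xsp b c"
  shows "fst p \<in> C2 b" "snd p \<in> C2 c"
  using assms unfolding Xsp_def by (auto simp: mem_Times_iff)

lemma Xnorm_nonneg:
  assumes "p \<in> Xsp b c"
  shows "0 \<le> C2_norm b (fst p)" "0 \<le> C2_norm c (snd p)" "0 \<le> Xnorm b c p"
  using C2_fun.C2_norm_nonneg[OF C2_fun.intro, OF Xsp_memD(1)[OF assms]]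
    C2_fun.C2_norm_nonneg[OF C2_fun.intro, OF Xsp_memD(2)[OF assms]]
  unfolding Xnorm_def by simp_all

lemma Xsp_snd_bounds:
  assumes "q \<in> Xsp b c"
  shows "bounded_by (snd q) (C2_norm c (snd q))" "lipschitz_with (snd q) (C2_norm c (snd q))"
    and "C2_norm c (snd q) \<le> Xnorm b c q"
  using C2_fun.bounded_by[OF C2_fun.intro] C2_fun.lipschitz[OF C2_fun.intro] Xsp_memD(2)[OF assms]
    Xnorm_nonneg[OF assms] unfolding Xnorm_def by auto

lemma padd_Xsp: "p \<in> Xsp b c \<Longrightarrow> h \<in> Xsp b c \<Longrightarrow> padd p h \<in> Xsp b c"
  unfolding padd_def Xsp_def by (auto intro!: C2_add simp: mem_Times_iff)

lemma psub_Xsp: "p \<in> Xsp b c \<Longrightarrow> h \<in> Xsp b c \<Longrightarrow> psub p h \<in> Xsp b c"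
  unfolding psub_def Xsp_def by (auto intro!: C2_diff simp: mem_Times_iff)

lemma Xsp_differentiable:
  assumes "p \<in> Xsp b c"
  shows "twice_differentiable (fst p)" "\<And>x. snd p differentiable (at x)"
  using C2_fun.twice_differentiable[OF C2_fun.intro, OF Xsp_memD(1)[OF assms]]
    C2_fun.differentiable[OF C2_fun.intro, OF Xsp_memD(2)[OF assms]] by blast+

lemma Gmap_eq:
  assumes "p \<in> Xsp b c"
  shows "Gmap f lam m0 p = ((\<lambda>x. 1/2 * grad_dot (fst p) (fst p) x - f (snd p x)),
                            (\<lambda>x. - div_flux (snd p) (fst p) x - lam * m0 x))"
  unfolding Gmap_def
  by (simp add: norm_grad_square diverg_scaleR_grad Xsp_differentiable[OF assms])

lemma dGmap_eq:
  assumes "p \<in> Xsp b c" "twice_differentiable (fst h)" "\<And>x. snd h differentiable (at x)"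
  shows "dGmap f p h = ((\<lambda>x. grad_dot (fst p) (fst h) x - deriv f (snd p x) * snd h x),
                        (\<lambda>x. - div_flux (snd h) (fst p) x - div_flux (snd p) (fst h) x))"
  unfolding dGmap_def
  by (simp add: inner_grad_eq_grad_dot diverg_scaleR_grad Xsp_differentiable[OF assms(1)] assms(2,3))

lemma dGmap_eq_Xsp:
  assumes "p \<in> Xsp b c" "h \<in> Xsp b c"
  shows "dGmap f p h = ((\<lambda>x. grad_dot (fst p) (fst h) x - deriv f (snd p x) * snd h x),
                        (\<lambda>x. - div_flux (snd h) (fst p) x - div_flux (snd p) (fst h) x))"
  by (rule dGmap_eq[OF assms(1) Xsp_differentiable[OF assms(2)]])

lemma Zsp_memI:
  assumes "0 < a" "a \<le> 1" "0 < b" "periodic g1" "periodic g2"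
    and "bounded_by g1 S1" "lipschitz_with g1 L1" "0 \<le> L1" "holder_with b g2 T2"
  shows "(g1, g2) \<in> Zsp a b"
  using C0_memI[OF assms(4,1) holder_with_exponent_mono[OF assms(1) assms(2,6,7,8)]]
    C0_memI[OF assms(5,3,9)]
  unfolding Zsp_def by simp

lemma Znorm_le:
  assumes "0 < a" "a \<le> 1" "bounded_by g1 S1" "lipschitz_with g1 L1" "0 \<le> L1"
    and "bounded_by g2 S2" "holder_with b g2 T2"
  shows "Znorm a b (g1, g2) \<le> 3 * S1 + L1 + S2 + T2"
  using C0_norm_le[OF assms(3) holder_with_exponent_mono[OF assms(1,2,3,4,5)]]
    C0_norm_le[OF assms(6,7)]
  unfolding Znorm_def by simp

lemma two_small_terms_le:
  fixes A N P e :: real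
  assumes "0 \<le> A" "0 \<le> N" "0 < e" "0 \<le> P" "P < e / (2 * (A + 1))"
  shows "A * P + e / (2 * (N + 1)) * N \<le> e"
proof -
  have "A * P \<le> A * (e / (2 * (A + 1)))" using assms by (intro mult_left_mono) auto
  also have "\<dots> \<le> e / 2" using assms(1,3) by (simp add: field_simps)
  finally have "A * P \<le> e / 2" .
  moreover have "e / (2 * (N + 1)) * N \<le> e / 2" using assms(2,3) by (simp add: field_simps)
  ultimately show ?thesis by linarith
qed

locale G_setting =
  fixes f :: "real \<Rightarrow> real" and \<alpha> \<beta> \<gamma> :: real
  assumes alpha: "0 < \<alpha>" "\<alpha> < 1"
    and f_diff: "\<forall>x. f differentiable (at x)"
    and f_bdd: "bounded (range f)" "bounded (range (deriv f))"
    and f_C2: "\<forall>x. deriv f differentiable (at x)" "continuous_on UNIV (deriv (deriv f))"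
    and exps: "0 < \<gamma>" "\<gamma> \<le> \<beta>" "\<beta> \<le> \<alpha>"
begin

lemma beta_pos: "0 < \<beta>" and beta_le_1: "\<beta> \<le> 1" and alpha_le_1: "\<alpha> \<le> 1"
  using alpha exps by linarith+

sublocale f: twice_DERIV f "deriv f" "deriv (deriv f)"
  by unfold_locales (simp_all add: DERIV_deriv_iff_real_differentiable f_diff f_C2(1))

lemma Gmap_in_Zsp:
  fixes p :: "('d::finite) fpair"
  assumes p: "p \<in> Xsp \<beta> \<gamma>" and m0: "m0 \<in> C0 \<alpha>"
  shows "Gmap f lam m0 p \<in> Zsp \<alpha> \<beta>"
proof -
  obtain u m where pu: "p = (u, m)" by (cases p)
  have u: "u \<in> C2 \<beta>" and m: "m \<in> C2 \<gamma>" using Xsp_memD[OF p] pu by auto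
  interpret U: C2_fun u \<beta> by (rule C2_fun.intro) fact
  interpret M: C2_fun m \<gamma> by (rule C2_fun.intro) fact
  obtain F0 where F0: "bounded_by f F0" using bounded_range_imp_bounded_by[OF f_bdd(1)] .
  obtain K1 where K1: "bounded_by (deriv f) K1" using bounded_range_imp_bounded_by[OF f_bdd(2)] .
  obtain H0 where H0: "holder_with \<beta> m0 H0" using C0_imp_holder_with[OF m0 beta_pos exps(3)] .
  have K1_nonneg: "0 \<le> K1" by (rule bounded_by_nonneg[OF K1])
  have fm: "lipschitz_with (\<lambda>x. f (m x)) (K1 * C2_norm \<gamma> m)"
    using K1 K1_nonneg unfolding bounded_by_def
    by (intro lipschitz_with_compose_DERIV[OF f.DERIV_F _ _ M.bounded_by M.lipschitz]) auto
  have L: "lipschitz_with (\<lambda>x. 1/2 * grad_dot u u x - f (m x))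
      (\<bar>1/2\<bar> * (CARD('d) * (2 * C2_norm \<beta> u * C2_norm \<beta> u)) + K1 * C2_norm \<gamma> m)"
    by (intro holder_with_diff holder_with_cmult grad_dot_bounds(2)[OF u u] fm)
  have "(\<lambda>x. 1/2 * grad_dot u u x - f (m x), \<lambda>x. - div_flux m u x - lam * m0 x) \<in> Zsp \<alpha> \<beta>"
  proof (rule Zsp_memI[OF alpha(1) alpha_le_1 beta_pos _ _ _ L])
    show "periodic (\<lambda>x. 1/2 * grad_dot u u x - f (m x))"
      using periodic_grad_dot[OF U.periodic U.periodic] M.periodic unfolding periodic_def by simp
    show "periodic (\<lambda>x. - div_flux m u x - lam * m0 x)"
      using periodic_div_flux[OF M.periodic U.periodic] m0 unfolding C0_def periodic_def by simp
    show "bounded_by (\<lambda>x. 1/2 * grad_dot u u x - f (m x))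
        (\<bar>1/2\<bar> * (CARD('d) * (C2_norm \<beta> u * C2_norm \<beta> u)) + F0)"
      using F0 by (intro bounded_by_diff bounded_by_cmult grad_dot_bounds(1)[OF u u]) (simp add: bounded_by_def)
    show "0 \<le> \<bar>1/2\<bar> * (CARD('d) * (2 * C2_norm \<beta> u * C2_norm \<beta> u)) + K1 * C2_norm \<gamma> m"
      using U.C2_norm_nonneg M.C2_norm_nonneg K1_nonneg by simp
    show "holder_with \<beta> (\<lambda>x. - div_flux m u x - lam * m0 x)
        (CARD('d) * (10 * C2_norm \<gamma> m * C2_norm \<beta> u) + \<bar>lam\<bar> * H0)"
      by (intro holder_with_diff holder_with_uminus holder_with_cmult H0
          div_flux_bounds(2)[OF m u beta_pos order_refl beta_le_1])
  qed
  then show ?thesis using Gmap_eq[OF p] pu by simp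
qed

lemma dGmap_bounded:
  fixes p :: "('d::finite) fpair"
  assumes p: "p \<in> Xsp \<beta> \<gamma>"
  obtains C where "\<And>h. h \<in> Xsp \<beta> \<gamma> \<Longrightarrow> dGmap f p h \<in> Zsp \<alpha> \<beta>"
    and "\<And>h. h \<in> Xsp \<beta> \<gamma> \<Longrightarrow> Znorm \<alpha> \<beta> (dGmap f p h) \<le> C * Xnorm \<beta> \<gamma> h"
proof -
  obtain u m where pu: "p = (u, m)" by (cases p)
  have u: "u \<in> C2 \<beta>" and m: "m \<in> C2 \<gamma>" using Xsp_memD[OF p] pu by auto
  interpret U: C2_fun u \<beta> by (rule C2_fun.intro) fact
  interpret M: C2_fun m \<gamma> by (rule C2_fun.intro) fact
  define d where "d = real CARD('d)"
  define Nu where "Nu = C2_norm \<beta> u"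
  define Nm where "Nm = C2_norm \<gamma> m"
  obtain K1 where K1: "bounded_by (deriv f) K1" using bounded_range_imp_bounded_by[OF f_bdd(2)] .
  obtain K where K: "0 \<le> K" "\<And>t. \<bar>t\<bar> \<le> Nm \<Longrightarrow> \<bar>deriv (deriv f) t\<bar> \<le> K"
    using continuous_bound_on_interval[OF f_C2(2)] by blast
  have nonneg: "0 \<le> d" "0 \<le> Nu" "0 \<le> Nm" "0 \<le> K1"
    using U.C2_norm_nonneg M.C2_norm_nonneg bounded_by_nonneg[OF K1] by (simp_all add: d_def Nu_def Nm_def)
  define C where "C = (5 * d * Nu + 12 * d * Nm) + (4 * K1 + K * Nm + 12 * d * Nu)"
  have "dGmap f p h \<in> Zsp \<alpha> \<beta> \<and> Znorm \<alpha> \<beta> (dGmap f p h) \<le> C * Xnorm \<beta> \<gamma> h"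
    if h: "h \<in> Xsp \<beta> \<gamma>" for h
  proof -
    obtain v r where hv: "h = (v, r)" by (cases h)
    have v: "v \<in> C2 \<beta>" and r: "r \<in> C2 \<gamma>" using Xsp_memD[OF h] hv by auto
    interpret V: C2_fun v \<beta> by (rule C2_fun.intro) fact
    interpret R: C2_fun r \<gamma> by (rule C2_fun.intro) fact
    define Nv where "Nv = C2_norm \<beta> v"
    define Nr where "Nr = C2_norm \<gamma> r"
    have "0 \<le> Nv" "0 \<le> Nr" using V.C2_norm_nonneg R.C2_norm_nonneg by (simp_all add: Nv_def Nr_def)
    have f'm: "lipschitz_with (\<lambda>x. deriv f (m x)) (K * Nm)"
      unfolding Nm_def by (rule lipschitz_with_compose_DERIV[OF f.DERIV_F' K(2)[unfolded Nm_def] K(1)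
          M.bounded_by M.lipschitz])
    have S1: "bounded_by (\<lambda>x. grad_dot u v x - deriv f (m x) * r x) (d * (Nu * Nv) + K1 * Nr)"
      unfolding d_def Nu_def Nv_def Nr_def
      by (intro bounded_by_diff bounded_by_mult grad_dot_bounds(1)[OF u v] R.bounded_by)
        (use K1 in \<open>simp add: bounded_by_def\<close>)
    have L1: "lipschitz_with (\<lambda>x. grad_dot u v x - deriv f (m x) * r x)
        (d * (2 * Nu * Nv) + (K1 * Nr + Nr * (K * Nm)))"
      unfolding d_def Nu_def Nv_def Nr_def
      by (intro holder_with_diff holder_with_mult grad_dot_bounds(2)[OF u v] R.bounded_by R.lipschitz
          f'm) (use K1 in \<open>simp add: bounded_by_def\<close>)
    have S2: "bounded_by (\<lambda>x. - div_flux r u x - div_flux m v x) (d * (2 * Nr * Nu) + d * (2 * Nm * Nv))"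
      and H2: "holder_with \<beta> (\<lambda>x. - div_flux r u x - div_flux m v x) (d * (10 * Nr * Nu) + d * (10 * Nm * Nv))"
      unfolding d_def Nu_def Nv_def Nr_def Nm_def by (rule div_flux_sum_bounds[OF u v r m beta_pos beta_le_1])+
    have L1_nonneg: "0 \<le> d * (2 * Nu * Nv) + (K1 * Nr + Nr * (K * Nm))"
      using nonneg K(1) \<open>0 \<le> Nv\<close> \<open>0 \<le> Nr\<close> by simp
    have eq: "dGmap f p h = (\<lambda>x. grad_dot u v x - deriv f (m x) * r x, \<lambda>x. - div_flux r u x - div_flux m v x)"
      using dGmap_eq_Xsp[OF p h] pu hv by simp
    have periodic: "periodic (\<lambda>x. grad_dot u v x - deriv f (m x) * r x)"
      "periodic (\<lambda>x. - div_flux r u x - div_flux m v x)"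
      using periodic_grad_dot[OF U.periodic V.periodic] periodic_div_flux[OF R.periodic U.periodic]
        periodic_div_flux[OF M.periodic V.periodic] M.periodic R.periodic
      unfolding periodic_def by simp_all
    have "Znorm \<alpha> \<beta> (dGmap f p h) \<le> 3 * (d * (Nu * Nv) + K1 * Nr) + (d * (2 * Nu * Nv) + (K1 * Nr + Nr * (K * Nm)))
        + (d * (2 * Nr * Nu) + d * (2 * Nm * Nv)) + (d * (10 * Nr * Nu) + d * (10 * Nm * Nv))"
      unfolding eq by (rule Znorm_le[OF alpha(1) alpha_le_1 S1 L1 L1_nonneg S2 H2])
    also have "\<dots> = (5 * d * Nu + 12 * d * Nm) * Nv + (4 * K1 + K * Nm + 12 * d * Nu) * Nr"
      by (simp add: algebra_simps)
    also have "\<dots> \<le> C * (Nv + Nr)" unfolding C_def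
      using nonneg K(1) \<open>0 \<le> Nv\<close> \<open>0 \<le> Nr\<close> by (simp add: algebra_simps add_mono mult_right_mono)
    finally have "Znorm \<alpha> \<beta> (dGmap f p h) \<le> C * Xnorm \<beta> \<gamma> h"
      by (simp add: Xnorm_def hv Nv_def Nr_def)
    moreover have "dGmap f p h \<in> Zsp \<alpha> \<beta>"
      unfolding eq by (rule Zsp_memI[OF alpha(1) alpha_le_1 beta_pos periodic S1 L1 L1_nonneg H2])
    ultimately show ?thesis by blast
  qed
  then show ?thesis using that by blast
qed

lemma bounded_linear_dGmap:
  fixes p :: "('d::finite) fpair"
  assumes p: "p \<in> Xsp \<beta> \<gamma>"
  shows "bounded_linear_between (Xsp \<beta> \<gamma>) (Xnorm \<beta> \<gamma>) (Zsp \<alpha> \<beta>) (Znorm \<alpha> \<beta>) (dGmap f p)"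
  unfolding bounded_linear_between_def
proof (intro conjI ballI allI)
  obtain C where "\<And>h. h \<in> Xsp \<beta> \<gamma> \<Longrightarrow> dGmap f p h \<in> Zsp \<alpha> \<beta>"
    and "\<And>h. h \<in> Xsp \<beta> \<gamma> \<Longrightarrow> Znorm \<alpha> \<beta> (dGmap f p h) \<le> C * Xnorm \<beta> \<gamma> h"
    using dGmap_bounded[OF p] by blast
  then show "dGmap f p h \<in> Zsp \<alpha> \<beta>" if "h \<in> Xsp \<beta> \<gamma>" for h
    using that by blast
  show "\<exists>C. \<forall>h\<in>Xsp \<beta> \<gamma>. Znorm \<alpha> \<beta> (dGmap f p h) \<le> C * Xnorm \<beta> \<gamma> h"
    using dGmap_bounded[OF p] by metis
next
  fix h k :: "'d fpair" assume h: "h \<in> Xsp \<beta> \<gamma>" and k: "k \<in> Xsp \<beta> \<gamma>"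
  note H = Xsp_differentiable[OF h] and K = Xsp_differentiable[OF k]
  have "\<And>x. fst h differentiable (at x)" "\<And>x. fst k differentiable (at x)"
    using H(1) K(1) twice_differentiableD by blast+
  then show "dGmap f p (padd h k) = padd (dGmap f p h) (dGmap f p k)"
    unfolding dGmap_eq_Xsp[OF p padd_Xsp[OF h k]] dGmap_eq_Xsp[OF p h] dGmap_eq_Xsp[OF p k]
    by (simp add: padd_def fun_eq_iff grad_dot_add_right div_flux_add_left div_flux_add_right H K
        algebra_simps)
next
  fix h :: "'d fpair" and c :: real assume h: "h \<in> Xsp \<beta> \<gamma>"
  note H = Xsp_differentiable[OF h]
  have "\<And>x. fst h differentiable (at x)" using H(1) twice_differentiableD by blast
  moreover have "dGmap f p (pscale c h) = ((\<lambda>x. grad_dot (fst p) (\<lambda>x. c * fst h x) x - deriv f (snd p x) * (c * snd h x)),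
      (\<lambda>x. - div_flux (\<lambda>x. c * snd h x) (fst p) x - div_flux (snd p) (\<lambda>x. c * fst h x) x))"
    using dGmap_eq[OF p, where h = "pscale c h"] H twice_differentiable_cmult[OF H(1)] unfolding pscale_def by simp
  ultimately show "dGmap f p (pscale c h) = pscale c (dGmap f p h)"
    unfolding dGmap_eq_Xsp[OF p h]
    by (simp add: pscale_def fun_eq_iff grad_dot_cmult_right div_flux_cmult_left div_flux_cmult_right H
        algebra_simps)
qed

lemma Gmap_remainder_eq:
  assumes p: "p \<in> Xsp \<beta> \<gamma>" and h: "h \<in> Xsp \<beta> \<gamma>"
  shows "psub (psub (Gmap f lam m0 (padd p h)) (Gmap f lam m0 p)) (dGmap f p h) =
    ((\<lambda>x. 1/2 * grad_dot (fst h) (fst h) x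
          - (f (snd p x + snd h x) - f (snd p x) - deriv f (snd p x) * snd h x)),
     (\<lambda>x. - div_flux (snd h) (fst h) x))"
proof -
  note P = Xsp_differentiable[OF p] and H = Xsp_differentiable[OF h]
  have D: "\<And>x. fst p differentiable (at x)" "\<And>x. fst h differentiable (at x)"
    using P(1) H(1) twice_differentiableD by blast+
  have "grad_dot (\<lambda>x. fst p x + fst h x) (\<lambda>x. fst p x + fst h x) x
      = grad_dot (fst p) (fst p) x + 2 * grad_dot (fst p) (fst h) x + grad_dot (fst h) (fst h) x" for x
    using D by (simp add: grad_dot_add_left grad_dot_add_right grad_dot_commute[of "fst h" "fst p"]
        differentiable_add)
  moreover have "div_flux (\<lambda>x. snd p x + snd h x) (\<lambda>x. fst p x + fst h x) x
      = div_flux (snd p) (fst p) x + div_flux (snd h) (fst p) x + div_flux (snd p) (fst h) x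
        + div_flux (snd h) (fst h) x" for x
    by (simp add: div_flux_add_left div_flux_add_right P H twice_differentiable_add)
  ultimately show ?thesis
    using Gmap_eq[OF padd_Xsp[OF p h], of f lam m0]
    unfolding Gmap_eq[OF p] dGmap_eq_Xsp[OF p h] psub_def padd_def
    by (simp add: fun_eq_iff algebra_simps)
qed

lemma Gmap_remainder_le:
  fixes p h :: "('d::finite) fpair" and K \<epsilon> :: real
  assumes p: "p \<in> Xsp \<beta> \<gamma>" and h: "h \<in> Xsp \<beta> \<gamma>" and small: "C2_norm \<gamma> (snd h) \<le> 1"
    and K: "\<And>t. \<bar>t\<bar> \<le> C2_norm \<gamma> (snd p) + 1 \<Longrightarrow> \<bar>deriv (deriv f) t\<bar> \<le> K" "0 \<le> K"
    and osc: "\<And>c s. \<bar>c\<bar> \<le> C2_norm \<gamma> (snd p) \<Longrightarrow> \<bar>s\<bar> \<le> C2_norm \<gamma> (snd h) \<Longrightarrow>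
             \<bar>deriv (deriv f) (c + s) - deriv (deriv f) c\<bar> \<le> \<epsilon>" "0 \<le> \<epsilon>"
  shows "Znorm \<alpha> \<beta> (psub (psub (Gmap f lam m0 (padd p h)) (Gmap f lam m0 p)) (dGmap f p h))
     \<le> ((15 * real CARD('d) + 4 * K) * Xnorm \<beta> \<gamma> h + \<epsilon> * C2_norm \<gamma> (snd p)) * Xnorm \<beta> \<gamma> h"
proof -
  obtain u m where pu: "p = (u, m)" by (cases p)
  obtain v r where hv: "h = (v, r)" by (cases h)
  have m: "m \<in> C2 \<gamma>" using Xsp_memD[OF p] pu by auto
  have v: "v \<in> C2 \<beta>" and r: "r \<in> C2 \<gamma>" using Xsp_memD[OF h] hv by auto
  interpret M: C2_fun m \<gamma> by (rule C2_fun.intro) fact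
  interpret V: C2_fun v \<beta> by (rule C2_fun.intro) fact
  interpret R: C2_fun r \<gamma> by (rule C2_fun.intro) fact
  define d where "d = real CARD('d)"
  define Nm where "Nm = C2_norm \<gamma> m"
  define Nv where "Nv = C2_norm \<beta> v"
  define Nr where "Nr = C2_norm \<gamma> r"
  define X where "X = Xnorm \<beta> \<gamma> h"
  have nonneg: "0 \<le> d" "0 \<le> Nm" "0 \<le> Nv" "0 \<le> Nr"
    using M.C2_norm_nonneg V.C2_norm_nonneg R.C2_norm_nonneg by (simp_all add: d_def Nm_def Nv_def Nr_def)
  have X: "X = Nv + Nr" unfolding X_def Xnorm_def hv Nv_def Nr_def by simp
  have Rb: "bounded_by (\<lambda>x. f (m x + r x) - f (m x) - deriv f (m x) * r x) (K * Nr * Nr)" (is ?Rb)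
    and Rl: "lipschitz_with (\<lambda>x. f (m x + r x) - f (m x) - deriv f (m x) * r x) (\<epsilon> * Nr * Nm + K * Nr * Nr)"
      (is ?Rl)
  proof -
    have "\<bar>deriv (deriv f) t\<bar> \<le> K" if "\<bar>t\<bar> \<le> C2_norm \<gamma> m + C2_norm \<gamma> r" for t
      using K(1)[of t] that small pu hv by simp
    moreover have "\<bar>deriv (deriv f) (c + s) - deriv (deriv f) c\<bar> \<le> \<epsilon>"
      if "\<bar>c\<bar> \<le> C2_norm \<gamma> m" "\<bar>s\<bar> \<le> C2_norm \<gamma> r" for c s
      using osc(1)[of c s] that pu hv by simp
    ultimately show ?Rb ?Rl
      using f.remainder_compose_bounds[OF M.bounded_by M.lipschitz R.bounded_by R.lipschitz _ K(2) _ osc(2)]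
      unfolding Nm_def Nr_def by blast+
  qed
  have S1: "bounded_by (\<lambda>x. 1/2 * grad_dot v v x - (f (m x + r x) - f (m x) - deriv f (m x) * r x))
      (\<bar>1/2\<bar> * (d * (Nv * Nv)) + K * Nr * Nr)"
    unfolding d_def Nv_def by (intro bounded_by_diff bounded_by_cmult grad_dot_bounds(1)[OF v v] Rb)
  have L1: "lipschitz_with (\<lambda>x. 1/2 * grad_dot v v x - (f (m x + r x) - f (m x) - deriv f (m x) * r x))
      (\<bar>1/2\<bar> * (d * (2 * Nv * Nv)) + (\<epsilon> * Nr * Nm + K * Nr * Nr))"
    unfolding d_def Nv_def by (intro holder_with_diff holder_with_cmult grad_dot_bounds(2)[OF v v] Rl)
  have S2: "bounded_by (\<lambda>x. - div_flux r v x) (d * (2 * Nr * Nv))"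
    and H2: "holder_with \<beta> (\<lambda>x. - div_flux r v x) (d * (10 * Nr * Nv))"
    unfolding d_def Nv_def Nr_def
    by (intro bounded_by_uminus holder_with_uminus
        div_flux_bounds[OF r v beta_pos order_refl beta_le_1])+
  have "Znorm \<alpha> \<beta> (\<lambda>x. 1/2 * grad_dot v v x - (f (m x + r x) - f (m x) - deriv f (m x) * r x),
      \<lambda>x. - div_flux r v x)
     \<le> 3 * (\<bar>1/2\<bar> * (d * (Nv * Nv)) + K * Nr * Nr) + (\<bar>1/2\<bar> * (d * (2 * Nv * Nv)) + (\<epsilon> * Nr * Nm + K * Nr * Nr))
       + d * (2 * Nr * Nv) + d * (10 * Nr * Nv)"
    by (rule Znorm_le[OF alpha(1) alpha_le_1 S1 L1 _ S2 H2]) (use nonneg K(2) osc(2) in simp)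
  also have "\<dots> = 5/2 * (d * (Nv * Nv)) + 4 * (K * (Nr * Nr)) + 12 * (d * (Nr * Nv)) + \<epsilon> * Nm * Nr"
    by (simp add: algebra_simps)
  also have "\<dots> \<le> 15 * (d * (X * X)) + 4 * (K * (X * X)) + \<epsilon> * Nm * X"
  proof -
    have "Nv \<le> X" "Nr \<le> X" using X nonneg by auto
    then have "Nv * Nv \<le> X * X" "Nr * Nr \<le> X * X" "Nr * Nv \<le> X * X"
      using nonneg by (auto intro!: mult_mono)
    then have "d * (Nv * Nv) \<le> d * (X * X)" "K * (Nr * Nr) \<le> K * (X * X)" "d * (Nr * Nv) \<le> d * (X * X)"
      using nonneg K(2) by (auto intro: mult_left_mono)
    moreover have "\<epsilon> * Nm * Nr \<le> \<epsilon> * Nm * X"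
      using \<open>Nr \<le> X\<close> osc(2) nonneg by (intro mult_left_mono) auto
    moreover have "0 \<le> d * (X * X)" using nonneg by simp
    ultimately show ?thesis by linarith
  qed
  also have "\<dots> = ((15 * d + 4 * K) * X + \<epsilon> * Nm) * X" by (simp add: algebra_simps)
  finally show ?thesis
    using Gmap_remainder_eq[OF p h, unfolded pu hv fst_conv snd_conv] unfolding pu hv
    by (simp add: X_def d_def Nm_def hv)
qed

lemma frechet_deriv_Gmap:
  fixes p :: "('d::finite) fpair"
  assumes p: "p \<in> Xsp \<beta> \<gamma>"
  shows "frechet_deriv_at (Xsp \<beta> \<gamma>) (Xnorm \<beta> \<gamma>) (Zsp \<alpha> \<beta>) (Znorm \<alpha> \<beta>) (Gmap f lam m0) (dGmap f p) p"
  unfolding frechet_deriv_at_def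
proof (intro conjI bounded_linear_dGmap[OF p] allI impI)
  fix e :: real assume e: "0 < e"
  define Nm where "Nm = C2_norm \<gamma> (snd p)"
  have Nm: "0 \<le> Nm" using Xnorm_nonneg[OF p] Nm_def by simp
  obtain K where K: "0 \<le> K" "\<And>t. \<bar>t\<bar> \<le> Nm + 1 \<Longrightarrow> \<bar>deriv (deriv f) t\<bar> \<le> K"
    using continuous_bound_on_interval[OF f_C2(2)] by blast
  define A where "A = 15 * real CARD('d) + 4 * K"
  have A: "0 \<le> A" unfolding A_def using K by simp
  define \<epsilon> where "\<epsilon> = e / (2 * (Nm + 1))"
  have \<epsilon>: "0 < \<epsilon>" unfolding \<epsilon>_def using e Nm by simp
  obtain \<delta> where \<delta>: "0 < \<delta>" "\<delta> \<le> 1"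
    "\<And>c s. \<bar>c\<bar> \<le> Nm \<Longrightarrow> \<bar>s\<bar> \<le> \<delta> \<Longrightarrow> \<bar>deriv (deriv f) (c + s) - deriv (deriv f) c\<bar> \<le> \<epsilon>"
    using continuous_modulus_on_interval[OF f_C2(2) \<epsilon>] by metis
  show "\<exists>r>0. \<forall>h\<in>Xsp \<beta> \<gamma>. Xnorm \<beta> \<gamma> h < r \<longrightarrow>
      Znorm \<alpha> \<beta> (psub (psub (Gmap f lam m0 (padd p h)) (Gmap f lam m0 p)) (dGmap f p h)) \<le> e * Xnorm \<beta> \<gamma> h"
  proof (intro exI[of _ "min \<delta> (e / (2 * (A + 1)))"] conjI ballI impI)
    show "0 < min \<delta> (e / (2 * (A + 1)))" using \<delta> e A by simp
    fix h :: "'d fpair" assume h: "h \<in> Xsp \<beta> \<gamma>" and hr: "Xnorm \<beta> \<gamma> h < min \<delta> (e / (2 * (A + 1)))"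
    have X: "C2_norm \<gamma> (snd h) \<le> Xnorm \<beta> \<gamma> h" "0 \<le> Xnorm \<beta> \<gamma> h"
      using Xnorm_nonneg[OF h] unfolding Xnorm_def by auto
    have "Znorm \<alpha> \<beta> (psub (psub (Gmap f lam m0 (padd p h)) (Gmap f lam m0 p)) (dGmap f p h))
        \<le> (A * Xnorm \<beta> \<gamma> h + \<epsilon> * Nm) * Xnorm \<beta> \<gamma> h"
      unfolding A_def Nm_def
    proof (rule Gmap_remainder_le[OF p h _ _ K(1)])
      show "C2_norm \<gamma> (snd h) \<le> 1" using X hr \<delta>(2) by linarith
      show "\<bar>deriv (deriv f) t\<bar> \<le> K" if "\<bar>t\<bar> \<le> C2_norm \<gamma> (snd p) + 1" for t
        using K(2) that Nm_def by simp
      show "\<bar>deriv (deriv f) (c + s) - deriv (deriv f) c\<bar> \<le> \<epsilon>"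
        if "\<bar>c\<bar> \<le> C2_norm \<gamma> (snd p)" "\<bar>s\<bar> \<le> C2_norm \<gamma> (snd h)" for c s
        using \<delta>(3) that X hr Nm_def by simp
    qed (use \<epsilon> in simp)
    also have "\<dots> \<le> e * Xnorm \<beta> \<gamma> h"
      using two_small_terms_le[OF A Nm e X(2)] hr X(2) unfolding \<epsilon>_def by (intro mult_right_mono) auto
    finally show "Znorm \<alpha> \<beta> (psub (psub (Gmap f lam m0 (padd p h)) (Gmap f lam m0 p)) (dGmap f p h))
        \<le> e * Xnorm \<beta> \<gamma> h" .
  qed
qed

lemma dGmap_diff_eq:
  assumes y: "y \<in> Xsp \<beta> \<gamma>" and z: "z \<in> Xsp \<beta> \<gamma>" and h: "h \<in> Xsp \<beta> \<gamma>"
  shows "psub (dGmap f y h) (dGmap f z h) =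
    ((\<lambda>x. grad_dot (fst (psub y z)) (fst h) x
          - (deriv f (snd z x + snd (psub y z) x) - deriv f (snd z x)) * snd h x),
     (\<lambda>x. - div_flux (snd h) (fst (psub y z)) x - div_flux (snd (psub y z)) (fst h) x))"
proof -
  note Y = Xsp_differentiable[OF y] and Z = Xsp_differentiable[OF z]
  have "\<And>x. fst y differentiable (at x)" "\<And>x. fst z differentiable (at x)"
    using Y(1) Z(1) twice_differentiableD by blast+
  then show ?thesis unfolding dGmap_eq_Xsp[OF y h] dGmap_eq_Xsp[OF z h] psub_def
    by (simp add: fun_eq_iff grad_dot_diff_left div_flux_diff_left div_flux_diff_right Y Z algebra_simps)
qed

lemma dGmap_diff_le:
  fixes y z h :: "('d::finite) fpair" and K \<omega> :: real
  assumes y: "y \<in> Xsp \<beta> \<gamma>" and z: "z \<in> Xsp \<beta> \<gamma>" and h: "h \<in> Xsp \<beta> \<gamma>"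
    and mz: "bounded_by (snd z) Rm" "lipschitz_with (snd z) Lm" "0 \<le> Lm"
    and S: "bounded_by (snd (psub y z)) S" "S \<le> C2_norm \<gamma> (snd (psub y z))"
    and K: "\<And>t. \<bar>t\<bar> \<le> Rm + S \<Longrightarrow> \<bar>deriv (deriv f) t\<bar> \<le> K" "0 \<le> K"
    and osc: "\<And>c s. \<bar>c\<bar> \<le> Rm \<Longrightarrow> \<bar>s\<bar> \<le> S \<Longrightarrow> \<bar>deriv (deriv f) (c + s) - deriv (deriv f) c\<bar> \<le> \<omega>" "0 \<le> \<omega>"
  shows "Znorm \<alpha> \<beta> (psub (dGmap f y h) (dGmap f z h))
     \<le> ((29 * real CARD('d) + 5 * K) * Xnorm \<beta> \<gamma> (psub y z) + \<omega> * Lm) * Xnorm \<beta> \<gamma> h"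
proof -
  have yz: "psub y z \<in> Xsp \<beta> \<gamma>" by (rule psub_Xsp[OF y z])
  obtain w \<mu> where wm: "psub y z = (w, \<mu>)" by (cases "psub y z")
  obtain v r where hv: "h = (v, r)" by (cases h)
  have w: "w \<in> C2 \<beta>" and mu: "\<mu> \<in> C2 \<gamma>" using Xsp_memD[OF yz] wm by auto
  have v: "v \<in> C2 \<beta>" and r: "r \<in> C2 \<gamma>" using Xsp_memD[OF h] hv by auto
  interpret W: C2_fun w \<beta> by (rule C2_fun.intro) fact
  interpret Mu: C2_fun \<mu> \<gamma> by (rule C2_fun.intro) fact
  interpret V: C2_fun v \<beta> by (rule C2_fun.intro) fact
  interpret R: C2_fun r \<gamma> by (rule C2_fun.intro) fact
  define Nw where "Nw = C2_norm \<beta> w"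
  define Nmu where "Nmu = C2_norm \<gamma> \<mu>"
  define Nv where "Nv = C2_norm \<beta> v"
  define Nr where "Nr = C2_norm \<gamma> r"
  define d where "d = real CARD('d)"
  define P where "P = Xnorm \<beta> \<gamma> (psub y z)"
  define Q where "Q = Xnorm \<beta> \<gamma> h"
  have nonneg: "0 \<le> Nw" "0 \<le> Nmu" "0 \<le> Nv" "0 \<le> Nr" "0 \<le> d"
    using W.C2_norm_nonneg Mu.C2_norm_nonneg V.C2_norm_nonneg R.C2_norm_nonneg
    by (simp_all add: Nw_def Nmu_def Nv_def Nr_def d_def)
  have PQ: "P = Nw + Nmu" "Q = Nv + Nr"
    unfolding P_def Q_def Xnorm_def wm hv Nw_def Nmu_def Nv_def Nr_def by simp_all
  have S': "bounded_by \<mu> S" "S \<le> Nmu" using S wm Nmu_def by auto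
  have S0: "0 \<le> S" by (rule bounded_by_nonneg[OF S'(1)])
  have \<phi>b: "bounded_by (\<lambda>x. deriv f (snd z x + \<mu> x) - deriv f (snd z x)) (K * S)"
    and \<phi>l: "lipschitz_with (\<lambda>x. deriv f (snd z x + \<mu> x) - deriv f (snd z x)) (\<omega> * Lm + K * Nmu)"
    using f.deriv_increment_compose_bounds[OF mz(1,2) S'(1) Mu.lipschitz K osc] unfolding Nmu_def
    by blast+
  have S1: "bounded_by (\<lambda>x. grad_dot w v x - (deriv f (snd z x + \<mu> x) - deriv f (snd z x)) * r x)
      (d * (Nw * Nv) + K * S * Nr)"
    unfolding d_def Nw_def Nv_def Nr_def
    by (intro bounded_by_diff bounded_by_mult grad_dot_bounds(1)[OF w v] \<phi>b R.bounded_by)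
  have L1: "lipschitz_with (\<lambda>x. grad_dot w v x - (deriv f (snd z x + \<mu> x) - deriv f (snd z x)) * r x)
      (d * (2 * Nw * Nv) + (K * S * Nr + Nr * (\<omega> * Lm + K * Nmu)))"
    unfolding d_def Nw_def Nv_def Nr_def
    by (intro holder_with_diff holder_with_mult grad_dot_bounds(2)[OF w v] \<phi>b \<phi>l R.bounded_by
        R.lipschitz)
  have S2: "bounded_by (\<lambda>x. - div_flux r w x - div_flux \<mu> v x) (d * (2 * Nr * Nw) + d * (2 * Nmu * Nv))"
    and H2: "holder_with \<beta> (\<lambda>x. - div_flux r w x - div_flux \<mu> v x) (d * (10 * Nr * Nw) + d * (10 * Nmu * Nv))"
    unfolding d_def Nw_def Nmu_def Nv_def Nr_def by (rule div_flux_sum_bounds[OF w v r mu beta_pos beta_le_1])+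
  have eq: "psub (dGmap f y h) (dGmap f z h) =
    (\<lambda>x. grad_dot w v x - (deriv f (snd z x + \<mu> x) - deriv f (snd z x)) * r x,
     \<lambda>x. - div_flux r w x - div_flux \<mu> v x)"
    using dGmap_diff_eq[OF y z h] wm hv by simp
  have "Znorm \<alpha> \<beta> (psub (dGmap f y h) (dGmap f z h))
     \<le> 3 * (d * (Nw * Nv) + K * S * Nr) + (d * (2 * Nw * Nv) + (K * S * Nr + Nr * (\<omega> * Lm + K * Nmu)))
       + (d * (2 * Nr * Nw) + d * (2 * Nmu * Nv)) + (d * (10 * Nr * Nw) + d * (10 * Nmu * Nv))"
    unfolding eq by (rule Znorm_le[OF alpha(1) alpha_le_1 S1 L1 _ S2 H2]) (use nonneg K(2) osc(2) S0 mz(3) in simp)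
  also have "\<dots> = 5 * (d * (Nw * Nv)) + 4 * (K * (S * Nr)) + \<omega> * Lm * Nr + K * (Nmu * Nr)
       + 12 * (d * (Nr * Nw)) + 12 * (d * (Nmu * Nv))"
    by (simp add: algebra_simps)
  also have "\<dots> \<le> 29 * (d * (P * Q)) + 5 * (K * (P * Q)) + \<omega> * Lm * Q"
  proof -
    have le: "Nw \<le> P" "Nmu \<le> P" "S \<le> P" "Nv \<le> Q" "Nr \<le> Q" using PQ nonneg S' by auto
    then have "Nw * Nv \<le> P * Q" "S * Nr \<le> P * Q" "Nmu * Nr \<le> P * Q" "Nr * Nw \<le> P * Q" "Nmu * Nv \<le> P * Q"
      using nonneg S0 by (auto intro!: mult_mono simp: mult.commute[of Nr])
    then have "d * (Nw * Nv) \<le> d * (P * Q)" "K * (S * Nr) \<le> K * (P * Q)" "K * (Nmu * Nr) \<le> K * (P * Q)"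
      "d * (Nr * Nw) \<le> d * (P * Q)" "d * (Nmu * Nv) \<le> d * (P * Q)"
      using nonneg K(2) by (auto intro: mult_left_mono)
    moreover have "\<omega> * Lm * Nr \<le> \<omega> * Lm * Q" using le osc(2) mz(3) by (intro mult_left_mono) auto
    ultimately show ?thesis by linarith
  qed
  also have "\<dots> = ((29 * d + 5 * K) * P + \<omega> * Lm) * Q" by (simp add: algebra_simps)
  finally show ?thesis unfolding P_def Q_def d_def .
qed

lemma deriv_continuous_dGmap:
  "deriv_continuous (Xsp \<beta> \<gamma>) (Xnorm \<beta> \<gamma>) (Znorm \<alpha> \<beta>) (dGmap f :: ('d::finite) fpair \<Rightarrow> _)"
  unfolding deriv_continuous_def
proof (intro ballI allI impI)
  fix x :: "'d fpair" and e :: real assume x: "x \<in> Xsp \<beta> \<gamma>" and e: "0 < e"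
  define Nm where "Nm = C2_norm \<gamma> (snd x)"
  have Nm: "0 \<le> Nm" using Xnorm_nonneg[OF x] Nm_def by simp
  have mx: "bounded_by (snd x) Nm" "lipschitz_with (snd x) Nm"
    using Xsp_snd_bounds[OF x] unfolding Nm_def by blast+
  obtain K where K: "0 \<le> K" "\<And>t. \<bar>t\<bar> \<le> Nm + 1 \<Longrightarrow> \<bar>deriv (deriv f) t\<bar> \<le> K"
    using continuous_bound_on_interval[OF f_C2(2)] by blast
  define B where "B = 29 * real CARD('d) + 5 * K"
  have B: "0 \<le> B" unfolding B_def using K by simp
  define \<epsilon> where "\<epsilon> = e / (2 * (Nm + 1))"
  have \<epsilon>: "0 < \<epsilon>" unfolding \<epsilon>_def using e Nm by simp
  obtain \<delta> where \<delta>: "0 < \<delta>" "\<delta> \<le> 1"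
    "\<And>c s. \<bar>c\<bar> \<le> Nm \<Longrightarrow> \<bar>s\<bar> \<le> \<delta> \<Longrightarrow> \<bar>deriv (deriv f) (c + s) - deriv (deriv f) c\<bar> \<le> \<epsilon>"
    using continuous_modulus_on_interval[OF f_C2(2) \<epsilon>] by metis
  show "\<exists>r>0. \<forall>y\<in>Xsp \<beta> \<gamma>. Xnorm \<beta> \<gamma> (psub y x) < r \<longrightarrow>
      (\<forall>h\<in>Xsp \<beta> \<gamma>. Znorm \<alpha> \<beta> (psub (dGmap f y h) (dGmap f x h)) \<le> e * Xnorm \<beta> \<gamma> h)"
  proof (intro exI[of _ "min \<delta> (e / (2 * (B + 1)))"] conjI ballI impI)
    show "0 < min \<delta> (e / (2 * (B + 1)))" using \<delta> e B by simp
    fix y h :: "'d fpair"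
    assume y: "y \<in> Xsp \<beta> \<gamma>" and yr: "Xnorm \<beta> \<gamma> (psub y x) < min \<delta> (e / (2 * (B + 1)))"
      and h: "h \<in> Xsp \<beta> \<gamma>"
    have yx: "psub y x \<in> Xsp \<beta> \<gamma>" by (rule psub_Xsp[OF y x])
    define S where "S = C2_norm \<gamma> (snd (psub y x))"
    have S: "S \<le> Xnorm \<beta> \<gamma> (psub y x)" "0 \<le> S" "0 \<le> Xnorm \<beta> \<gamma> (psub y x)"
      using Xnorm_nonneg[OF yx] unfolding S_def Xnorm_def by auto
    have S_small: "S \<le> 1" "S \<le> \<delta>" using S yr \<delta>(2) by auto
    have "Znorm \<alpha> \<beta> (psub (dGmap f y h) (dGmap f x h)) \<le> (B * Xnorm \<beta> \<gamma> (psub y x) + \<epsilon> * Nm) * Xnorm \<beta> \<gamma> h"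
      unfolding B_def
    proof (rule dGmap_diff_le[OF y x h mx Nm _ eq_refl[OF S_def] _ K(1) _ less_imp_le[OF \<epsilon>]])
      show "bounded_by (snd (psub y x)) S"
        using Xsp_snd_bounds(1)[OF yx] unfolding S_def .
      show "\<bar>deriv (deriv f) t\<bar> \<le> K" if "\<bar>t\<bar> \<le> Nm + S" for t
        using K(2) that S_small by simp
      show "\<bar>deriv (deriv f) (c + s) - deriv (deriv f) c\<bar> \<le> \<epsilon>" if "\<bar>c\<bar> \<le> Nm" "\<bar>s\<bar> \<le> S" for c s
        using \<delta>(3) that S_small by simp
    qed
    also have "\<dots> \<le> e * Xnorm \<beta> \<gamma> h"
      using two_small_terms_le[OF B Nm e S(3)] yr Xnorm_nonneg(3)[OF h] unfolding \<epsilon>_def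
      by (intro mult_right_mono) auto
    finally show "Znorm \<alpha> \<beta> (psub (dGmap f y h) (dGmap f x h)) \<le> e * Xnorm \<beta> \<gamma> h" .
  qed
qed

text \<open>Near \<open>x\<close> the density components stay in a fixed bounded range, on which \<open>f''\<close> is Lipschitz;
  its oscillation over increments of size \<open>S\<close> is then \<open>O(S)\<close>, which turns the \<open>\<omega>\<close>-term of
  \<open>dGmap_diff_le\<close> into a Lipschitz term.\<close>

lemma dGmap_diff_le_near:
  fixes x y z h :: "('d::finite) fpair" and K L :: real
  assumes x: "x \<in> Xsp \<beta> \<gamma>" and y: "y \<in> Xsp \<beta> \<gamma>" and z: "z \<in> Xsp \<beta> \<gamma>" and h: "h \<in> Xsp \<beta> \<gamma>"
    and near: "Xnorm \<beta> \<gamma> (psub y x) < 1" "Xnorm \<beta> \<gamma> (psub z x) < 1"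
    and K: "\<And>t. \<bar>t\<bar> \<le> C2_norm \<gamma> (snd x) + 3 \<Longrightarrow> \<bar>deriv (deriv f) t\<bar> \<le> K" "0 \<le> K"
    and L: "\<And>a b. \<bar>a\<bar> \<le> C2_norm \<gamma> (snd x) + 3 \<Longrightarrow> \<bar>b\<bar> \<le> C2_norm \<gamma> (snd x) + 3 \<Longrightarrow>
              \<bar>deriv (deriv f) a - deriv (deriv f) b\<bar> \<le> L * \<bar>a - b\<bar>" "0 \<le> L"
  shows "Znorm \<alpha> \<beta> (psub (dGmap f y h) (dGmap f z h))
    \<le> (29 * real CARD('d) + 5 * K + L * (C2_norm \<gamma> (snd x) + 1)) * Xnorm \<beta> \<gamma> (psub y z) * Xnorm \<beta> \<gamma> h"
proof -
  define Nm where "Nm = C2_norm \<gamma> (snd x)"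
  define P where "P = Xnorm \<beta> \<gamma> (psub y z)"
  define S where "S = min 2 (C2_norm \<gamma> (snd (psub y z)))"
  have yx: "psub y x \<in> Xsp \<beta> \<gamma>" and zx: "psub z x \<in> Xsp \<beta> \<gamma>" and yz: "psub y z \<in> Xsp \<beta> \<gamma>"
    by (rule psub_Xsp; fact)+
  have Nm: "0 \<le> Nm" using Xnorm_nonneg[OF x] Nm_def by simp
  have S: "0 \<le> S" "S \<le> 2" "S \<le> P" "S \<le> C2_norm \<gamma> (snd (psub y z))"
    using Xnorm_nonneg[OF yz] Xsp_snd_bounds(3)[OF yz] unfolding S_def P_def by auto
  have "bounded_by (snd (psub y z)) 2"
    unfolding bounded_by_def
  proof
    fix q
    have "\<bar>snd (psub y x) q\<bar> < 1" "\<bar>snd (psub z x) q\<bar> < 1"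
      using Xsp_snd_bounds(1,3)[OF yx] Xsp_snd_bounds(1,3)[OF zx] near
      unfolding bounded_by_def by (meson le_less_trans)+
    moreover have "snd (psub y z) q = snd (psub y x) q - snd (psub z x) q"
      unfolding psub_def by simp
    ultimately show "\<bar>snd (psub y z) q\<bar> \<le> 2" by linarith
  qed
  then have yz_bound: "bounded_by (snd (psub y z)) S"
    using Xsp_snd_bounds(1)[OF yz] unfolding bounded_by_def S_def by simp
  have "snd z = (\<lambda>q. snd x q + snd (psub z x) q)" unfolding psub_def by simp
  then have mz: "bounded_by (snd z) (Nm + 1)" "lipschitz_with (snd z) (Nm + 1)"
    using bounded_by_add[OF Xsp_snd_bounds(1)[OF x] Xsp_snd_bounds(1)[OF zx]]
      holder_with_add[OF Xsp_snd_bounds(2)[OF x] Xsp_snd_bounds(2)[OF zx]]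
      Xsp_snd_bounds(3)[OF zx] near(2)
    unfolding Nm_def by (auto intro: bounded_by_mono holder_with_mono)
  have "Znorm \<alpha> \<beta> (psub (dGmap f y h) (dGmap f z h))
      \<le> ((29 * real CARD('d) + 5 * K) * P + (L * S) * (Nm + 1)) * Xnorm \<beta> \<gamma> h"
    unfolding P_def
  proof (rule dGmap_diff_le[OF y z h mz _ yz_bound S(4) _ K(2)])
    show "0 \<le> Nm + 1" using Nm by simp
    show "\<bar>deriv (deriv f) t\<bar> \<le> K" if "\<bar>t\<bar> \<le> Nm + 1 + S" for t
      using K(1) that S(2) Nm_def by simp
    show "\<bar>deriv (deriv f) (c + s) - deriv (deriv f) c\<bar> \<le> L * S" if "\<bar>c\<bar> \<le> Nm + 1" "\<bar>s\<bar> \<le> S" for c s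
    proof -
      have "\<bar>deriv (deriv f) (c + s) - deriv (deriv f) c\<bar> \<le> L * \<bar>(c + s) - c\<bar>"
        by (rule L(1)) (use that S Nm_def in \<open>auto simp: abs_le_iff\<close>)
      also have "\<dots> \<le> L * S" using that L(2) by (simp add: mult_left_mono)
      finally show ?thesis .
    qed
    show "0 \<le> L * S" using L(2) S(1) by simp
  qed
  also have "\<dots> \<le> (29 * real CARD('d) + 5 * K + L * (Nm + 1)) * P * Xnorm \<beta> \<gamma> h"
  proof (rule mult_right_mono[OF _ Xnorm_nonneg(3)[OF h]])
    have "(L * S) * (Nm + 1) \<le> (L * P) * (Nm + 1)"
      using S L(2) Nm by (intro mult_right_mono mult_left_mono) auto
    then show "(29 * real CARD('d) + 5 * K) * P + L * S * (Nm + 1)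
        \<le> (29 * real CARD('d) + 5 * K + L * (Nm + 1)) * P"
      by (simp add: algebra_simps)
  qed
  finally show ?thesis unfolding P_def Nm_def .
qed

lemma deriv_locally_lipschitz_dGmap:
  assumes f''_lipschitz: "\<forall>B. bounded B \<longrightarrow> (\<exists>L. \<forall>x\<in>B. \<forall>y\<in>B.
              \<bar>deriv (deriv f) x - deriv (deriv f) y\<bar> \<le> L * \<bar>x - y\<bar>)"
  shows "deriv_locally_lipschitz (Xsp \<beta> \<gamma>) (Xnorm \<beta> \<gamma>) (Znorm \<alpha> \<beta>) (dGmap f :: ('d::finite) fpair \<Rightarrow> _)"
  unfolding deriv_locally_lipschitz_def
proof (intro ballI)
  fix x :: "'d fpair" assume x: "x \<in> Xsp \<beta> \<gamma>"
  define R where "R = C2_norm \<gamma> (snd x) + 3"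
  obtain L0 where L0: "\<forall>a\<in>{-R..R}. \<forall>b\<in>{-R..R}. \<bar>deriv (deriv f) a - deriv (deriv f) b\<bar> \<le> L0 * \<bar>a - b\<bar>"
    using f''_lipschitz by (meson bounded_closed_interval)
  have L: "\<bar>deriv (deriv f) a - deriv (deriv f) b\<bar> \<le> max L0 0 * \<bar>a - b\<bar>"
    if "\<bar>a\<bar> \<le> R" "\<bar>b\<bar> \<le> R" for a b
  proof -
    have "\<bar>deriv (deriv f) a - deriv (deriv f) b\<bar> \<le> L0 * \<bar>a - b\<bar>" using L0 that by (auto simp: abs_le_iff)
    also have "\<dots> \<le> max L0 0 * \<bar>a - b\<bar>" by (intro mult_right_mono) auto
    finally show ?thesis .
  qed
  obtain K where K: "0 \<le> K" "\<And>t. \<bar>t\<bar> \<le> R \<Longrightarrow> \<bar>deriv (deriv f) t\<bar> \<le> K"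
    using continuous_bound_on_interval[OF f_C2(2)] by blast
  show "\<exists>r>0. \<exists>C. \<forall>y\<in>Xsp \<beta> \<gamma>. \<forall>z\<in>Xsp \<beta> \<gamma>. Xnorm \<beta> \<gamma> (psub y x) < r \<longrightarrow> Xnorm \<beta> \<gamma> (psub z x) < r \<longrightarrow>
      (\<forall>h\<in>Xsp \<beta> \<gamma>. Znorm \<alpha> \<beta> (psub (dGmap f y h) (dGmap f z h)) \<le> C * Xnorm \<beta> \<gamma> (psub y z) * Xnorm \<beta> \<gamma> h)"
    using dGmap_diff_le_near[OF x, where K = K and L = "max L0 0"] K L unfolding R_def
    by (intro exI[of _ 1] conjI zero_less_one exI ballI impI) auto
qed

end

theorem lemma4p2:
  fixes f :: "real \<Rightarrow> real" and lam \<alpha> \<beta> \<gamma> :: real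
    and m0 :: "real^('d::finite) \<Rightarrow> real"
  assumes lam: "lam > 0"
    and alpha: "0 < \<alpha>" "\<alpha> < 1"
    and m0: "m0 \<in> C0 \<alpha>" "\<forall>x. m0 x \<ge> 0" "integral (cbox 0 1) m0 = 1"
    and f_diff: "\<forall>x. f differentiable (at x)"
    and f_bdd: "bounded (range f)" "bounded (range (deriv f))"
    and f_C2: "\<forall>x. deriv f differentiable (at x)" "continuous_on UNIV (deriv (deriv f))"
    and exps: "0 < \<gamma>" "\<gamma> \<le> \<beta>" "\<beta> \<le> \<alpha>"
  shows "(\<forall>p\<in>Xsp \<beta> \<gamma>. Gmap f lam m0 p \<in> (Zsp \<alpha> \<beta> :: 'd fpair set))
       \<and> (\<forall>p\<in>Xsp \<beta> \<gamma>. frechet_deriv_at (Xsp \<beta> \<gamma>) (Xnorm \<beta> \<gamma>) (Zsp \<alpha> \<beta>) (Znorm \<alpha> \<beta>)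
                          (Gmap f lam m0) (dGmap f p) p)
       \<and> deriv_continuous (Xsp \<beta> \<gamma>) (Xnorm \<beta> \<gamma>) (Znorm \<alpha> \<beta>) (dGmap f)
       \<and> ((\<forall>B. bounded B \<longrightarrow> (\<exists>L. \<forall>x\<in>B. \<forall>y\<in>B.
              \<bar>deriv (deriv f) x - deriv (deriv f) y\<bar> \<le> L * \<bar>x - y\<bar>))
          \<longrightarrow> deriv_locally_lipschitz (Xsp \<beta> \<gamma>) (Xnorm \<beta> \<gamma>) (Znorm \<alpha> \<beta>) (dGmap f))"
proof -
  interpret G_setting f \<alpha> \<beta> \<gamma>
    by unfold_locales (use alpha f_diff f_bdd f_C2 exps in auto)
  show ?thesis
    using Gmap_in_Zsp[OF _ m0(1)] frechet_deriv_Gmap deriv_continuous_dGmap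
      deriv_locally_lipschitz_dGmap by blast
qed

end
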